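(* Let $m,n\ge 1$. For $i=1,\ldots,m$ let $f_i:\mathbb{R}^n\to\mathbb{R}$ be convex and let $h_i:\mathbb{R}^n\to\mathbb{R}$ be convex and differentiable with $\nabla h_i$ Lipschitz continuous with constant $L_i>0$; put $F:=\sum_{i=1}^m(f_i+h_i)$. Let $g:\mathbb{R}^n\to\mathbb{R}$ be convex and differentiable with $\nabla g$ Lipschitz continuous with constant $L_g>0$, and assume $\min g=0$. Let $\mathcal{S}$ be the (assumed nonempty) solution set of $\min\{F(x):x\in\arg\min g\}$. Let $(\alpha_k)_{k\ge1}$, $(\beta_k)_{k\ge1}$ be positive sequences, $x_1\in\mathbb{R}^n$, and for $k\ge1$ define $$\varphi_{1,k}:=x_k-\alpha_k\beta_k\nabla g(x_k),\qquad \varphi_{i+1,k}:=\operatorname{prox}_{\alpha_k f_i}\big(\varphi_{i,k}-\alpha_k\nabla h_i(\varphi_{i,k})\big)\ (i=1,\ldots,m),\qquad x_{k+1}:=\varphi_{m+1,k}.$$ Assume (H1) $\partial\big(\sum_{i=1}^m f_i+\delta_{\arg\min g}\big)=\sum_{i=1}^m\partial f_i+N_{\arg\min g}$; (H2) $\sum_k\alpha_k=+\infty$, $\sum_k\alpha_k^2<+\infty$; (H3) $0<\liminf_k\alpha_k\beta_k\le\limsup_k\alpha_k\beta_k<2/L_g$; (H4) for every $p\in\operatorname{ran}(N_{\arg\min g})$, $\sum_k\alpha_k\beta_k[g^*(p/\beta_k)-\sigma_{\arg\min g}(p/\beta_k)]<+\infty$. Then: (i) $(x_k)_{k\ge1}$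 is quasi-Fejér monotone relative to $\mathcal{S}$; (ii) for each $u\in\mathcal{S}$ the limit $\lim_{k\to\infty}\|x_k-u\|$ exists, and $\sum_{k=1}^\infty\alpha_k\beta_k g(x_k)<+\infty$, $\sum_{k=1}^\infty\alpha_k\beta_k\|\nabla g(x_k)\|^2<+\infty$, and $\sum_{k=1}^\infty\sum_{i=1}^m\|\varphi_{i+1,k}-\varphi_{i,k}\|^2<+\infty$; (iii) $\lim_{k\to\infty}g(x_k)=\lim_{k\to\infty}\|\nabla g(x_k)\|=\lim_{k\to\infty}\sum_{i=1}^m\|\varphi_{i+1,k}-\varphi_{i,k}\|^2=\lim_{k\to\infty}\|x_k-\varphi_{1,k}\|=0$; (iv) every sequential cluster point of $(x_k)_{k\ge1}$ lies in $\arg\min g$.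
   Context: A sequence $(x_k)_{k\ge1}\subset\mathbb{R}^n$ is quasi-Fejér monotone relative to a nonempty set $C\subset\mathbb{R}^n$ if for each $c\in C$ there exist a sequence $(\delta_k)_{k\ge1}\subset[0,+\infty)$ with $\sum_{k=1}^\infty\delta_k<+\infty$ and $k_0\in\mathbb{N}$ such that $\|x_{k+1}-c\|^2\le\|x_k-c\|^2+\delta_k$ for all $k\ge k_0$. For $r>0$ and convex $f$, $\operatorname{prox}_{rf}(x)$ is the unique minimizer of $u\mapsto f(u)+\frac{1}{2r}\|u-x\|^2$. $g^*$ is the Fenchel conjugate of $g$. For a nonempty set $X$, $\delta_X$ is the indicator function, $N_X(x)=\{w:\langle w,y-x\rangle\le0\ \forall y\in X\}$ for $x\in X$ the normal cone, $\operatorname{ran}(N_X)=\bigcup_{x\in X}N_X(x)$, and $\sigma_X(w)=\sup_{y\in X}\langle y,w\rangle$ the support function. *)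

theory Defs
  imports "HOL-Analysis.Analysis"
begin

definition argmin_set :: "('a \<Rightarrow> real) \<Rightarrow> 'a set" where
  "argmin_set g = {x. \<forall>y. g x \<le> g y}"

definition prox :: "real \<Rightarrow> ('a::real_normed_vector \<Rightarrow> real) \<Rightarrow> 'a \<Rightarrow> 'a" where
  "prox r f x = (THE u. \<forall>v. f u + norm (u - x)^2 / (2*r) \<le> f v + norm (v - x)^2 / (2*r))"

definition indicator_fun :: "'a set \<Rightarrow> 'a \<Rightarrow> ereal" where
  "indicator_fun X x = (if x \<in> X then 0 else \<infinity>)"

definition subdiff :: "('a::real_inner \<Rightarrow> ereal) \<Rightarrow> 'a \<Rightarrow> 'a set" where
  "subdiff f x = {w. \<bar>f x\<bar> \<noteq> \<infinity> \<and> (\<forall>y. f x + ereal (w \<bullet> (y - x)) \<le> f y)}"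

definition normal_cone :: "'a::real_inner set \<Rightarrow> 'a \<Rightarrow> 'a set" where
  "normal_cone X x = (if x \<in> X then {w. \<forall>y\<in>X. w \<bullet> (y - x) \<le> 0} else {})"

definition fconj :: "('a::real_inner \<Rightarrow> real) \<Rightarrow> 'a \<Rightarrow> ereal" where
  "fconj g p = (SUP x. ereal (p \<bullet> x - g x))"

definition support_fun :: "'a::real_inner set \<Rightarrow> 'a \<Rightarrow> ereal" where
  "support_fun X w = (SUP y\<in>X. ereal (y \<bullet> w))"

text \<open>Quasi-Fejer monotonicity (sequence indexed from 0 here).\<close>
definition quasi_fejer :: "(nat \<Rightarrow> 'a::real_normed_vector) \<Rightarrow> 'a set \<Rightarrow> bool" where
  "quasi_fejer x C \<longleftrightarrow> (\<forall>c\<in>C. \<exists>\<delta>::nat \<Rightarrow> real. (\<forall>k. \<delta> k \<ge> 0) \<and> summable \<delta> \<and>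
      (\<exists>k0. \<forall>k\<ge>k0. norm (x (Suc k) - c)^2 \<le> norm (x k - c)^2 + \<delta> k))"

end

theory Submission
  imports Defs
begin

text \<open>
  Fix a solution \<open>u\<close>. Hypothesis (H1) splits the optimality condition at \<open>u\<close> into subgradients
  \<open>w i\<close> of the \<open>f i\<close> and a normal vector \<open>p\<close> to \<open>argmin g\<close> with \<open>\<Sum>i. w i + \<nabla>h i u = -p\<close>.
  Comparing one iteration with \<open>u\<close> -- a gradient step on the penalty (controlled by the
  Baillon--Haddad inequality) followed by \<open>m\<close> forward-backward steps -- gives, once
  \<open>\<alpha> k L i\<close> is small and \<open>\<alpha> k \<beta> k\<close> stays below \<open>2 / Lg\<close>,
  \<open>\<parallel>x (k+1) - u\<parallel>\<^sup>2 \<le> \<parallel>x k - u\<parallel>\<^sup>2 - P k + \<delta> k\<close>,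
  where \<open>P k\<close> is a positive combination of \<open>\<alpha> k \<beta> k g (x k)\<close>, \<open>\<alpha> k \<beta> k \<parallel>\<nabla>g (x k)\<parallel>\<^sup>2\<close> and
  \<open>\<Sum>i. \<parallel>\<phi> k (i+1) - \<phi> k i\<parallel>\<^sup>2\<close>. The error \<open>\<delta> k\<close> is summable: the Young remainder is
  \<open>O(\<alpha> k\<^sup>2)\<close>, and the term \<open>2 \<alpha> k \<langle>p, x k - u\<rangle>\<close> is paid for, via Fenchel--Young, by part of
  \<open>\<alpha> k \<beta> k g (x k)\<close> and the conjugate gap of (H4). The Robbins--Siegmund lemma then yields
  quasi-Fejer monotonicity, convergence of \<open>\<parallel>x k - u\<parallel>\<close> and \<open>\<Sum>k. P k < \<infinity>\<close>; the remaining
  statements follow from \<open>P k \<longrightarrow> 0\<close> and \<open>\<alpha> k \<beta> k\<close> being bounded away from \<open>0\<close>.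
\<close>

section \<open>Smooth convex functions\<close>

lemma has_real_derivative_along_line:
  assumes "\<forall>y. (h has_derivative (\<lambda>v. D y \<bullet> v)) (at y)"
  shows "((\<lambda>t. h (x + t *\<^sub>R d)) has_real_derivative (D (x + t *\<^sub>R d) \<bullet> d)) (at t)"
proof -
  have "((\<lambda>t. x + t *\<^sub>R d) has_derivative (\<lambda>s. s *\<^sub>R d)) (at t)"
    by (auto intro!: derivative_eq_intros)
  from has_derivative_compose[OF this assms[rule_format, of "x + t *\<^sub>R d"]]
  show ?thesis
    by (simp add: has_field_derivative_def mult.commute[of _ "D (x + t *\<^sub>R d) \<bullet> d"])
qed

lemma convex_gradient_ineq:
  fixes h :: "'a::real_inner \<Rightarrow> real"
  assumes convex: "convex_on UNIV h" and grad: "\<forall>y. (h has_derivative (\<lambda>v. D y \<bullet> v)) (at y)"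
  shows "h x + D x \<bullet> (y - x) \<le> h y"
proof -
  let ?p = "\<lambda>t. h (x + t *\<^sub>R (y - x))"
  have "convex_on UNIV ?p"
  proof (rule convex_onI)
    fix t u a :: real assume "0 < a" "a < 1"
    have "x + ((1 - a) *\<^sub>R t + a *\<^sub>R u) *\<^sub>R (y - x) =
        (1 - a) *\<^sub>R (x + t *\<^sub>R (y - x)) + a *\<^sub>R (x + u *\<^sub>R (y - x))"
      by (simp add: algebra_simps)
    then show "?p ((1 - a) *\<^sub>R t + a *\<^sub>R u) \<le> (1 - a) * ?p t + a * ?p u"
      using convex_onD[OF convex, of a "x + t *\<^sub>R (y - x)" "x + u *\<^sub>R (y - x)"] \<open>0 < a\<close> \<open>a < 1\<close>
      by auto
  qed simp
  then have "D x \<bullet> (y - x) * (1 - 0) \<le> ?p 1 - ?p 0"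
    by (rule convex_on_imp_above_tangent)
      (use has_real_derivative_along_line[OF grad, of x "y - x" 0] in auto)
  then show ?thesis by simp
qed

lemma lipschitz_gradient_descent_ineq:
  fixes h :: "'a::real_inner \<Rightarrow> real"
  assumes grad: "\<forall>y. (h has_derivative (\<lambda>v. D y \<bullet> v)) (at y)" and lip: "L-lipschitz_on UNIV D"
  shows "h y \<le> h x + D x \<bullet> (y - x) + L / 2 * (norm (y - x))^2"
proof -
  let ?d = "y - x"
  define p where "p t = h (x + t *\<^sub>R ?d) - t * (D x \<bullet> ?d) - L / 2 * t^2 * (norm ?d)^2" for t
  define p' where "p' t = D (x + t *\<^sub>R ?d) \<bullet> ?d - D x \<bullet> ?d - L * t * (norm ?d)^2" for t
  have "(p has_real_derivative p' t) (at t)" for t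
    unfolding p_def p'_def by (auto intro!: derivative_eq_intros has_real_derivative_along_line[OF grad])
  then obtain z where z: "0 < z" "z < 1" and mvt: "p 1 - p 0 = p' z"
    using MVT2[of 0 1 p p'] by auto
  have "D (x + z *\<^sub>R ?d) \<bullet> ?d - D x \<bullet> ?d = (D (x + z *\<^sub>R ?d) - D x) \<bullet> ?d"
    by (simp add: inner_diff_left)
  also have "\<dots> \<le> norm (D (x + z *\<^sub>R ?d) - D x) * norm ?d"
    by (rule norm_cauchy_schwarz)
  also have "\<dots> \<le> L * norm (z *\<^sub>R ?d) * norm ?d"
    using lipschitz_onD[OF lip, of "x + z *\<^sub>R ?d" x] by (simp add: dist_norm mult_right_mono)
  also have "\<dots> = L * z * (norm ?d)^2"
    using z by (simp add: power2_eq_square)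
  finally have "p 1 - p 0 \<le> 0" using mvt by (simp add: p'_def)
  then show ?thesis unfolding p_def by (simp add: algebra_simps)
qed

lemma lipschitz_gradient_norm_le:
  fixes g :: "'a::real_inner \<Rightarrow> real"
  assumes grad: "\<forall>y. (g has_derivative (\<lambda>v. D y \<bullet> v)) (at y)"
    and lip: "L-lipschitz_on UNIV D" and L: "L > 0" and lower: "\<forall>z. c \<le> g z"
  shows "(norm (D x))^2 / (2 * L) \<le> g x - c"
proof -
  define z where "z = x - (1 / L) *\<^sub>R D x"
  have zx: "z - x = - (1 / L) *\<^sub>R D x"
    by (simp add: z_def)
  have "g z \<le> g x + D x \<bullet> (z - x) + L / 2 * (norm (z - x))^2"
    by (rule lipschitz_gradient_descent_ineq[OF grad lip])
  also have "\<dots> = g x - (norm (D x))^2 / L + L / 2 * ((norm (D x))^2 / L^2)"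
    using L by (simp add: zx power2_norm_eq_inner power_divide)
  also have "\<dots> = g x - (norm (D x))^2 / (2 * L)"
    using L by (simp add: field_simps power2_eq_square)
  finally show ?thesis using lower[rule_format, of z] by linarith
qed

text \<open>Baillon--Haddad type inequality: evaluate the gradient inequality at \<open>x\<close> and the descent
  inequality at \<open>y\<close> both at the point \<open>y - (D y - D x) /\<^sub>R L\<close>.\<close>

lemma lipschitz_gradient_cocoercive_ineq:
  fixes g :: "'a::real_inner \<Rightarrow> real"
  assumes convex: "convex_on UNIV g" and grad: "\<forall>y. (g has_derivative (\<lambda>v. D y \<bullet> v)) (at y)"
    and lip: "L-lipschitz_on UNIV D" and L: "L > 0"
  shows "g x + D x \<bullet> (y - x) + (norm (D y - D x))^2 / (2 * L) \<le> g y"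
proof -
  define e where "e = D y - D x"
  define z where "z = y - (1 / L) *\<^sub>R e"
  have lower: "g x + D x \<bullet> (z - x) \<le> g z"
    by (rule convex_gradient_ineq[OF convex grad])
  have upper: "g z \<le> g y + D y \<bullet> (z - y) + L / 2 * (norm (z - y))^2"
    by (rule lipschitz_gradient_descent_ineq[OF grad lip])
  have "D y \<bullet> (z - y) - D x \<bullet> (z - x) = - D x \<bullet> (y - x) - (D y - D x) \<bullet> e / L"
    by (simp add: z_def inner_diff_left inner_diff_right algebra_simps diff_divide_distrib)
  also have "(D y - D x) \<bullet> e = (norm e)^2"
    by (simp add: e_def power2_norm_eq_inner)
  finally have "D y \<bullet> (z - y) - D x \<bullet> (z - x) = - D x \<bullet> (y - x) - (norm e)^2 / L" .
  moreover have "L / 2 * (norm (z - y))^2 = (norm e)^2 / (2 * L)"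
    using L by (simp add: z_def power_divide power2_eq_square)
  ultimately show ?thesis using lower upper unfolding e_def by (simp add: field_simps)
qed

lemma lipschitz_gradient_minimizer_inner_ge:
  fixes g :: "'a::real_inner \<Rightarrow> real"
  assumes convex: "convex_on UNIV g" and grad: "\<forall>y. (g has_derivative (\<lambda>v. D y \<bullet> v)) (at y)"
    and lip: "L-lipschitz_on UNIV D" and L: "L > 0"
    and min: "\<forall>y. g u \<le> g y" and \<theta>: "\<theta> \<le> 1"
  shows "\<theta> * (g y - g u) + (2 - \<theta>) / (2 * L) * (norm (D y))^2 \<le> D y \<bullet> (y - u)"
proof -
  have "(norm (D u))^2 / (2 * L) \<le> g u - g u"
    by (rule lipschitz_gradient_norm_le[OF grad lip L min])
  then have "D u = 0" using L by (simp add: divide_le_0_iff)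
  then have "g y - g u + (norm (D y))^2 / (2 * L) \<le> D y \<bullet> (y - u)"
    using lipschitz_gradient_cocoercive_ineq[OF convex grad lip L, of y u]
    by (simp add: inner_diff_right)
  moreover have "(1 - \<theta>) * ((norm (D y))^2 / (2 * L)) \<le> (1 - \<theta>) * (g y - g u)"
    using lipschitz_gradient_norm_le[OF grad lip L min] \<theta> by (intro mult_left_mono) auto
  ultimately show ?thesis using L by (simp add: field_simps)
qed

lemma lipschitz_gradient_step_toward_minimizer:
  fixes g :: "'a::real_inner \<Rightarrow> real"
  assumes convex: "convex_on UNIV g" and grad: "\<forall>y. (g has_derivative (\<lambda>v. D y \<bullet> v)) (at y)"
    and lip: "L-lipschitz_on UNIV D" and L: "L > 0"
    and min: "\<forall>y. g u \<le> g y" and \<theta>: "\<theta> \<le> 1" and b: "0 \<le> b" "b \<le> 2 * (1 - \<theta>) / L"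
  shows "(norm (y - b *\<^sub>R D y - u))^2
    \<le> (norm (y - u))^2 - 2 * b * \<theta> * (g y - g u) - b * \<theta> / L * (norm (D y))^2"
proof -
  have "(norm (y - b *\<^sub>R D y - u))^2 = (norm (y - u))^2 - 2 * b * (D y \<bullet> (y - u)) + b^2 * (norm (D y))^2"
    unfolding power2_norm_eq_inner
    by (simp add: inner_diff_left inner_diff_right inner_commute algebra_simps power2_eq_square)
  also have "\<dots> \<le> (norm (y - u))^2 - 2 * b * (\<theta> * (g y - g u) + (2 - \<theta>) / (2 * L) * (norm (D y))^2)
      + b * (2 * (1 - \<theta>) / L) * (norm (D y))^2"
  proof -
    have "2 * b * (\<theta> * (g y - g u) + (2 - \<theta>) / (2 * L) * (norm (D y))^2) \<le> 2 * b * (D y \<bullet> (y - u))"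
      using lipschitz_gradient_minimizer_inner_ge[OF convex grad lip L min \<theta>] b
      by (intro mult_left_mono) auto
    moreover have "b^2 * (norm (D y))^2 \<le> b * (2 * (1 - \<theta>) / L) * (norm (D y))^2"
      using mult_left_mono[OF b(2) b(1)] by (intro mult_right_mono) (simp_all add: power2_eq_square)
    ultimately show ?thesis by (intro add_mono diff_left_mono)
  qed
  also have "\<dots> = (norm (y - u))^2 - 2 * b * \<theta> * (g y - g u) - b * \<theta> / L * (norm (D y))^2"
    using L by (simp add: field_simps)
  finally show ?thesis .
qed

section \<open>The proximal map\<close>

lemma nonneg_if_small_perturbations_nonneg:
  fixes q c :: real
  assumes "\<And>t. 0 < t \<Longrightarrow> t < 1 \<Longrightarrow> 0 \<le> q + t * c" and "0 \<le> c"
  shows "0 \<le> q"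
proof (rule ccontr)
  assume "\<not> 0 \<le> q"
  define t where "t = min (1/2) (- q / (2 * (c + 1)))"
  have t: "0 < t" "t < 1" using \<open>\<not> 0 \<le> q\<close> assms(2) by (auto simp: t_def field_simps)
  have "t * c \<le> (- q / (2 * (c + 1))) * c" using assms(2) by (intro mult_right_mono) (auto simp: t_def)
  also have "\<dots> < - q / 2" using \<open>\<not> 0 \<le> q\<close> assms(2) by (simp add: field_simps)
  finally show False using assms(1)[OF t] \<open>\<not> 0 \<le> q\<close> by linarith
qed

text \<open>Compare \<open>u\<close> with the points of the segment from \<open>u\<close> to \<open>v\<close> close to \<open>u\<close>.\<close>

lemma prox_objective_minimizer_ineq:
  fixes f :: "'a::real_inner \<Rightarrow> real"
  assumes convex: "convex_on UNIV f" and r: "r > 0"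
    and min: "\<forall>v. f u + norm (u - z)^2 / (2*r) \<le> f v + norm (v - z)^2 / (2*r)"
  shows "f u + (z - u) \<bullet> (v - u) / r \<le> f v"
proof -
  have "0 \<le> (f v - f u - (z - u) \<bullet> (v - u) / r) + t * ((norm (v - u))^2 / (2 * r))"
    if t: "0 < t" "t < 1" for t
  proof -
    define w where "w = (1 - t) *\<^sub>R u + t *\<^sub>R v"
    have fw: "f w \<le> (1 - t) * f u + t * f v"
      unfolding w_def using convex_onD[OF convex, of t u v] t by simp
    have wz: "w - z = (u - z) + t *\<^sub>R (v - u)" by (simp add: w_def algebra_simps)
    have nw: "(norm (w - z))^2 = (norm (u - z))^2 + (2 * t * ((u - z) \<bullet> (v - u)) + t^2 * (norm (v - u))^2)"
      unfolding wz power2_norm_eq_inner by (simp add: algebra_simps inner_commute power2_eq_square)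
    have "f u + norm (u - z)^2 / (2*r) \<le> f w + norm (w - z)^2 / (2*r)"
      using min by blast
    then have "0 \<le> t * (f v - f u) + (2 * t * ((u - z) \<bullet> (v - u)) + t^2 * (norm (v - u))^2) / (2 * r)"
      using fw unfolding nw add_divide_distrib by (simp add: algebra_simps)
    then have "0 \<le> t * ((f v - f u - (z - u) \<bullet> (v - u) / r) + t * ((norm (v - u))^2 / (2 * r)))"
      using r by (simp add: field_simps power2_eq_square inner_diff_left)
    then show ?thesis using t by (simp add: zero_le_mult_iff)
  qed
  then have "0 \<le> f v - f u - (z - u) \<bullet> (v - u) / r"
    by (rule nonneg_if_small_perturbations_nonneg) (use r in auto)
  then show ?thesis by simp
qed

lemma convex_on_lower_bound_linear_growth:
  fixes f :: "'a::euclidean_space \<Rightarrow> real"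
  assumes convex: "convex_on UNIV f"
  obtains K where "0 \<le> K" "\<And>v. f z - K - K * norm (v - z) \<le> f v"
proof -
  have "continuous_on (cball z 1) f"
    using convex_on_continuous[OF open_UNIV convex] continuous_on_subset by blast
  then obtain v0 where v0: "\<forall>v\<in>cball z 1. f v0 \<le> f v"
    using continuous_attains_inf[of "cball z 1" f] by (metis centre_in_cball compact_cball empty_iff zero_le_one)
  define K where "K = max 0 (f z - f v0)"
  have "f z - K - K * norm (v - z) \<le> f v" for v
  proof (cases "norm (v - z) \<le> 1")
    case True
    then have "f v0 \<le> f v" using v0 by (simp add: dist_norm norm_minus_commute)
    moreover have "f z - K \<le> f v0" "0 \<le> K * norm (v - z)" by (auto simp: K_def)
    ultimately show ?thesis by linarith
  next
    case False
    define s where "s = norm (v - z)"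
    have s: "s > 1" using False by (simp add: s_def)
    define w where "w = (1 - 1/s) *\<^sub>R z + (1/s) *\<^sub>R v"
    have "w - z = (1/s) *\<^sub>R (v - z)" by (simp add: w_def algebra_simps)
    then have "norm (w - z) = (1/s) * s" using s by (simp add: s_def)
    then have "norm (w - z) = 1" using s by simp
    then have "f v0 \<le> f w" using v0 by (simp add: dist_norm norm_minus_commute)
    also have "f w \<le> (1 - 1/s) * f z + (1/s) * f v"
      unfolding w_def using convex_onD[OF convex, of "1/s" z v] s by simp
    finally have "s * f v0 \<le> s * ((1 - 1/s) * f z + (1/s) * f v)" using s by simp
    also have "\<dots> = (s - 1) * f z + f v" using s by (simp add: field_simps)
    finally have "f z + s * (f v0 - f z) \<le> f v" by (simp add: algebra_simps)
    moreover have "- (K * s) \<le> s * (f v0 - f z)"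
      using mult_left_mono[of "- K" "f v0 - f z" s] s by (simp add: K_def mult.commute)
    moreover have "0 \<le> K" by (simp add: K_def)
    ultimately show ?thesis unfolding s_def[symmetric] by linarith
  qed
  then show thesis by (rule that[rotated]) (simp add: K_def)
qed

lemma prox_objective_has_minimizer:
  fixes f :: "'a::euclidean_space \<Rightarrow> real"
  assumes convex: "convex_on UNIV f" and r: "r > 0"
  obtains u where "\<forall>v. f u + norm (u - z)^2 / (2*r) \<le> f v + norm (v - z)^2 / (2*r)"
proof -
  obtain K where K: "0 \<le> K" "\<And>v. f z - K - K * norm (v - z) \<le> f v"
    using convex_on_lower_bound_linear_growth[OF convex, where z = z] by blast
  define \<Phi> where "\<Phi> v = f v + norm (v - z)^2 / (2*r)" for v
  define R where "R = 4 * r * K + 1"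
  have far: "\<Phi> z < \<Phi> v" if "R < norm (v - z)" for v
  proof -
    define s where "s = norm (v - z)"
    have s: "4 * r * K + 1 < s" using that by (simp add: s_def R_def)
    have "0 \<le> 4 * r * K" using r K by simp
    then have s1: "1 \<le> s" using s by linarith
    have "2 * K < s / (2 * r)" using s r by (simp add: field_simps)
    then have "s * (2 * K) < s * (s / (2 * r))" using s1 by (intro mult_strict_left_mono) auto
    moreover have "K * 1 \<le> K * s" using s1 K(1) by (intro mult_left_mono)
    ultimately have "K + K * s < s * (s / (2 * r))" by (simp add: algebra_simps)
    then show ?thesis using K(2)[of v] by (simp add: \<Phi>_def s_def power2_eq_square)
  qed
  have "continuous_on (cball z R) \<Phi>"
    unfolding \<Phi>_def using convex_on_continuous[OF open_UNIV convex] r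
    by (intro continuous_intros) (auto intro: continuous_on_subset)
  moreover have "z \<in> cball z R" using K r by (simp add: R_def)
  ultimately obtain u where u: "u \<in> cball z R" "\<forall>v\<in>cball z R. \<Phi> u \<le> \<Phi> v"
    using continuous_attains_inf[OF compact_cball] by blast
  have "\<Phi> u \<le> \<Phi> v" for v
  proof (cases "v \<in> cball z R")
    case False
    then have "R < norm (v - z)" by (simp add: dist_norm norm_minus_commute)
    then show ?thesis using far[of v] u \<open>z \<in> cball z R\<close> by fastforce
  qed (use u in blast)
  then show thesis using that unfolding \<Phi>_def by blast
qed

lemma prox_eqI:
  fixes f :: "'a::real_inner \<Rightarrow> real"
  assumes convex: "convex_on UNIV f" and r: "r > 0"
    and min: "\<forall>v. f u + norm (u - z)^2 / (2*r) \<le> f v + norm (v - z)^2 / (2*r)"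
  shows "prox r f z = u"
  unfolding prox_def
proof (rule the_equality)
  fix u' assume min': "\<forall>v. f u' + norm (u' - z)^2 / (2*r) \<le> f v + norm (v - z)^2 / (2*r)"
  have "(z - u') \<bullet> (u - u') + (z - u) \<bullet> (u' - u) = (norm (u - u'))^2"
    by (simp add: power2_norm_eq_inner algebra_simps inner_commute)
  then have "(norm (u - u'))^2 / r = (z - u') \<bullet> (u - u') / r + (z - u) \<bullet> (u' - u) / r"
    by (metis add_divide_distrib)
  then have "(norm (u - u'))^2 / r \<le> 0"
    using prox_objective_minimizer_ineq[OF convex r min', of u]
      prox_objective_minimizer_ineq[OF convex r min, of u']
    by linarith
  then show "u' = u" using r by (simp add: divide_le_0_iff)
qed (rule min)

lemma prox_ineq:
  fixes f :: "'a::euclidean_space \<Rightarrow> real"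
  assumes convex: "convex_on UNIV f" and r: "r > 0"
  shows "f (prox r f z) + (z - prox r f z) \<bullet> (v - prox r f z) / r \<le> f v"
proof -
  obtain u where "\<forall>v. f u + norm (u - z)^2 / (2*r) \<le> f v + norm (v - z)^2 / (2*r)"
    using prox_objective_has_minimizer[OF convex r] .
  with prox_objective_minimizer_ineq[OF convex r] prox_eqI[OF convex r] show ?thesis by simp
qed

section \<open>One iteration of the scheme\<close>

lemma inner_diff_polarization:
  fixes p q u :: "'a::real_inner"
  shows "2 * ((q - p) \<bullet> (u - p)) = (norm (q - p))^2 + (norm (p - u))^2 - (norm (q - u))^2"
  by (simp add: power2_norm_eq_inner inner_diff_left inner_diff_right inner_commute algebra_simps)

lemma prox_gradient_step_estimate:
  fixes f h :: "'a::euclidean_space \<Rightarrow> real"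
  assumes f_convex: "convex_on UNIV f" and h_convex: "convex_on UNIV h"
    and h_grad: "\<forall>y. (h has_derivative (\<lambda>v. Dh y \<bullet> v)) (at y)" and h_lip: "L-lipschitz_on UNIV Dh"
    and a: "a > 0" and subgrad: "\<forall>y. f u + w \<bullet> (y - u) \<le> f y"
    and p: "p = prox a f (q - a *\<^sub>R Dh q)"
  shows "(norm (p - u))^2 \<le> (norm (q - u))^2 - (1 - a * L) * (norm (p - q))^2 + 2 * a * ((w + Dh u) \<bullet> (u - p))"
proof -
  have "f p + (q - a *\<^sub>R Dh q - p) \<bullet> (u - p) / a \<le> f u"
    using prox_ineq[OF f_convex a, of "q - a *\<^sub>R Dh q" u] unfolding p[symmetric] .
  moreover have "(q - a *\<^sub>R Dh q - p) \<bullet> (u - p) = (q - p) \<bullet> (u - p) - a * (Dh q \<bullet> (u - p))"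
    by (simp add: inner_diff_left algebra_simps)
  ultimately have prox: "a * f p + (q - p) \<bullet> (u - p) - a * (Dh q \<bullet> (u - p)) \<le> a * f u"
    using a by (simp add: field_simps)
  have "Dh q \<bullet> (u - p) \<le> h u - h p + L / 2 * (norm (p - q))^2"
    using convex_gradient_ineq[OF h_convex h_grad, of q u]
      lipschitz_gradient_descent_ineq[OF h_grad h_lip, of p q]
    by (simp add: inner_diff_right)
  then have "a * (Dh q \<bullet> (u - p)) \<le> a * (h u - h p + L / 2 * (norm (p - q))^2)"
    using a by (intro mult_left_mono) auto
  also have "\<dots> = a * h u - a * h p + a * L / 2 * (norm (p - q))^2"
    by (simp add: algebra_simps)
  finally have smooth: "a * (Dh q \<bullet> (u - p)) \<le> a * h u - a * h p + a * L / 2 * (norm (p - q))^2" .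
  have "f u - f p + (h u - h p) \<le> (w + Dh u) \<bullet> (u - p)"
    using subgrad[rule_format, of p] convex_gradient_ineq[OF h_convex h_grad, of u p]
    by (simp add: inner_add_left inner_diff_right)
  then have "a * (f u - f p + (h u - h p)) \<le> a * ((w + Dh u) \<bullet> (u - p))"
    using a by (intro mult_left_mono) auto
  then have "a * f u - a * f p + a * h u - a * h p \<le> a * ((w + Dh u) \<bullet> (u - p))"
    by (simp add: algebra_simps)
  with prox smooth have "(q - p) \<bullet> (u - p) \<le> a * ((w + Dh u) \<bullet> (u - p)) + a * L / 2 * (norm (p - q))^2"
    by linarith
  then have "(norm (q - p))^2 + (norm (p - u))^2 - (norm (q - u))^2
      \<le> 2 * a * ((w + Dh u) \<bullet> (u - p)) + a * L * (norm (p - q))^2"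
    unfolding inner_diff_polarization[symmetric] by simp
  moreover have "(1 - a * L) * (norm (p - q))^2 = (norm (q - p))^2 - a * L * (norm (p - q))^2"
    by (simp add: norm_minus_commute[of q p] algebra_simps)
  ultimately show ?thesis by linarith
qed

lemma incremental_prox_gradient_estimate:
  fixes f h :: "nat \<Rightarrow> 'a::euclidean_space \<Rightarrow> real"
  assumes f_convex: "\<forall>i\<in>{1..m}. convex_on UNIV (f i)" and h_convex: "\<forall>i\<in>{1..m}. convex_on UNIV (h i)"
    and h_grad: "\<forall>i\<in>{1..m}. \<forall>y. (h i has_derivative (\<lambda>v. Dh i y \<bullet> v)) (at y)"
    and h_lip: "\<forall>i\<in>{1..m}. (L i)-lipschitz_on UNIV (Dh i)"
    and a: "a > 0" and subgrad: "\<forall>i\<in>{1..m}. \<forall>y. f i u + w i \<bullet> (y - u) \<le> f i y"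
    and \<phi>: "\<forall>i\<in>{1..m}. \<phi> (i + 1) = prox a (f i) (\<phi> i - a *\<^sub>R Dh i (\<phi> i))"
  shows "(norm (\<phi> (m + 1) - u))^2 \<le> (norm (\<phi> 1 - u))^2
     - (\<Sum>i=1..m. (1 - a * L i) * (norm (\<phi> (i + 1) - \<phi> i))^2)
     + 2 * a * (\<Sum>i=1..m. (w i + Dh i u) \<bullet> (u - \<phi> (i + 1)))"
proof -
  have "(norm (\<phi> (Suc i) - u))^2 - (norm (\<phi> i - u))^2
      \<le> 2 * a * ((w i + Dh i u) \<bullet> (u - \<phi> (i + 1))) - (1 - a * L i) * (norm (\<phi> (i + 1) - \<phi> i))^2"
    if i: "i \<in> {1..m}" for i
    using prox_gradient_step_estimate[OF bspec[OF f_convex i] bspec[OF h_convex i]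
        bspec[OF h_grad i] bspec[OF h_lip i] a bspec[OF subgrad i] bspec[OF \<phi> i]]
    by simp
  then have "(\<Sum>i=1..m. (norm (\<phi> (Suc i) - u))^2 - (norm (\<phi> i - u))^2) \<le>
     (\<Sum>i=1..m. 2 * a * ((w i + Dh i u) \<bullet> (u - \<phi> (i + 1))) - (1 - a * L i) * (norm (\<phi> (i + 1) - \<phi> i))^2)"
    by (rule sum_mono)
  also have "\<dots> = 2 * a * (\<Sum>i=1..m. (w i + Dh i u) \<bullet> (u - \<phi> (i + 1)))
      - (\<Sum>i=1..m. (1 - a * L i) * (norm (\<phi> (i + 1) - \<phi> i))^2)"
    by (simp add: sum_subtractf sum_distrib_left)
  finally show ?thesis
    using sum_Suc_diff[of 1 m "\<lambda>i. (norm (\<phi> i - u))^2"] by simp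
qed

lemma young_inner_le:
  fixes c v :: "'a::real_inner"
  assumes \<eta>: "\<eta> > 0"
  shows "2 * a * (c \<bullet> v) \<le> a^2 * (norm c)^2 / \<eta> + \<eta> * (norm v)^2"
proof -
  have "0 \<le> (norm (a *\<^sub>R c - \<eta> *\<^sub>R v))^2" by simp
  also have "\<dots> = a^2 * (norm c)^2 - \<eta> * (2 * a * (c \<bullet> v)) + \<eta>^2 * (norm v)^2"
    unfolding power2_norm_eq_inner
    by (simp add: inner_diff_left inner_diff_right inner_commute algebra_simps power2_eq_square)
  finally have "\<eta> * (2 * a * (c \<bullet> v)) \<le> \<eta> * (a^2 * (norm c)^2 / \<eta> + \<eta> * (norm v)^2)"
    using \<eta> by (simp add: algebra_simps power2_eq_square)
  then show ?thesis using \<eta> by simp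
qed

lemma norm_diff_path_le:
  fixes \<phi> :: "nat \<Rightarrow> 'a::real_normed_vector"
  assumes i: "i \<in> {1..m}"
  shows "norm (x - \<phi> (i + 1)) \<le> norm (x - \<phi> 1) + (\<Sum>j=1..m. norm (\<phi> (j + 1) - \<phi> j))"
proof -
  have "x - \<phi> (i + 1) = (x - \<phi> 1) - (\<Sum>j=1..i. \<phi> (Suc j) - \<phi> j)"
    by (simp add: sum_Suc_diff)
  then have "norm (x - \<phi> (i + 1)) \<le> norm (x - \<phi> 1) + norm (\<Sum>j=1..i. \<phi> (Suc j) - \<phi> j)"
    by (metis norm_triangle_ineq4)
  also have "norm (\<Sum>j=1..i. \<phi> (Suc j) - \<phi> j) \<le> (\<Sum>j=1..i. norm (\<phi> (Suc j) - \<phi> j))"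
    by (rule norm_sum)
  also have "\<dots> \<le> (\<Sum>j=1..m. norm (\<phi> (Suc j) - \<phi> j))"
    using i by (intro sum_mono2) auto
  finally show ?thesis by simp
qed

lemma sum_norm_path_squared_le:
  fixes \<phi> :: "nat \<Rightarrow> 'a::real_normed_vector"
  shows "(norm (x - \<phi> 1) + (\<Sum>j=1..m. norm (\<phi> (j + 1) - \<phi> j)))^2
    \<le> (real m + 1) * ((norm (x - \<phi> 1))^2 + (\<Sum>j=1..m. (norm (\<phi> (j + 1) - \<phi> j))^2))"
proof -
  define y where "y j = (if j = 0 then norm (x - \<phi> 1) else norm (\<phi> (j + 1) - \<phi> j))" for j
  have "(\<Sum>j=0..m. y j)^2 \<le> (\<Sum>j=0..m. (y j)^2) * card {0..m}"
    by (rule sum_squared_le_sum_of_squares)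
  moreover have "(\<Sum>j=0..m. y j) = norm (x - \<phi> 1) + (\<Sum>j=1..m. norm (\<phi> (j + 1) - \<phi> j))"
    "(\<Sum>j=0..m. (y j)^2) = (norm (x - \<phi> 1))^2 + (\<Sum>j=1..m. (norm (\<phi> (j + 1) - \<phi> j))^2)"
    by (simp_all add: sum.atLeast_Suc_atMost y_def)
  ultimately show ?thesis by (simp add: algebra_simps)
qed

lemma young_sum_inner_path_le:
  fixes c \<phi> :: "nat \<Rightarrow> 'a::real_inner"
  assumes \<eta>: "\<eta> > 0"
  shows "2 * a * (\<Sum>i=1..m. c i \<bullet> (x - \<phi> (i + 1))) \<le> a^2 * (\<Sum>i=1..m. (norm (c i))^2) / \<eta>
     + \<eta> * (real m * (real m + 1)) * ((norm (x - \<phi> 1))^2 + (\<Sum>j=1..m. (norm (\<phi> (j + 1) - \<phi> j))^2))"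
proof -
  define T where "T = norm (x - \<phi> 1) + (\<Sum>j=1..m. norm (\<phi> (j + 1) - \<phi> j))"
  have "2 * a * (c i \<bullet> (x - \<phi> (i + 1))) \<le> a^2 * (norm (c i))^2 / \<eta> + \<eta> * T^2" if i: "i \<in> {1..m}" for i
  proof -
    have "norm (x - \<phi> (i + 1)) \<le> T" unfolding T_def by (rule norm_diff_path_le[OF i])
    then have "\<eta> * (norm (x - \<phi> (i + 1)))^2 \<le> \<eta> * T^2"
      using \<eta> by (intro mult_left_mono power_mono) auto
    then show ?thesis using young_inner_le[OF \<eta>, of a "c i" "x - \<phi> (i + 1)"] by linarith
  qed
  then have "2 * a * (\<Sum>i=1..m. c i \<bullet> (x - \<phi> (i + 1))) \<le> (\<Sum>i=1..m. a^2 * (norm (c i))^2 / \<eta> + \<eta> * T^2)"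
    unfolding sum_distrib_left by (rule sum_mono)
  also have "\<dots> = a^2 * (\<Sum>i=1..m. (norm (c i))^2) / \<eta> + real m * (\<eta> * T^2)"
    by (simp add: sum.distrib sum_distrib_left sum_divide_distrib)
  also have "real m * (\<eta> * T^2) \<le> real m * (\<eta> * ((real m + 1) * ((norm (x - \<phi> 1))^2 + (\<Sum>j=1..m. (norm (\<phi> (j + 1) - \<phi> j))^2))))"
    using \<eta> sum_norm_path_squared_le[of x \<phi> m] unfolding T_def by (intro mult_left_mono) auto
  finally show ?thesis by (simp add: algebra_simps)
qed

text \<open>The cross terms \<open>\<langle>w i + Dh i u, y - \<phi> (i + 1)\<rangle>\<close> are absorbed by Young's inequality with
  weight \<open>\<eta>\<close>; what remains is \<open>\<langle>p, y - u\<rangle>\<close>, since the \<open>w i + Dh i u\<close> sum to \<open>-p\<close>.\<close>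

lemma penalized_incremental_step_estimate:
  fixes f h :: "nat \<Rightarrow> 'a::euclidean_space \<Rightarrow> real" and g :: "'a \<Rightarrow> real"
  assumes f_convex: "\<forall>i\<in>{1..m}. convex_on UNIV (f i)" and h_convex: "\<forall>i\<in>{1..m}. convex_on UNIV (h i)"
    and h_grad: "\<forall>i\<in>{1..m}. \<forall>y. (h i has_derivative (\<lambda>v. Dh i y \<bullet> v)) (at y)"
    and h_lip: "\<forall>i\<in>{1..m}. (L i)-lipschitz_on UNIV (Dh i)"
    and g_convex: "convex_on UNIV g" and g_grad: "\<forall>y. (g has_derivative (\<lambda>v. Dg y \<bullet> v)) (at y)"
    and g_lip: "Lg > 0" "Lg-lipschitz_on UNIV Dg" and g_min: "\<forall>y. g u \<le> g y"
    and a: "a > 0" "\<forall>i\<in>{1..m}. a * L i \<le> 1 / 4"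
    and \<theta>: "0 < \<theta>" "\<theta> \<le> 1" and b: "0 \<le> b" "b \<le> 2 * (1 - \<theta>) / Lg"
    and \<eta>: "\<eta> > 0" "real m * (real m + 1) * \<eta> \<le> 1 / 4"
      "real m * (real m + 1) * \<eta> * b \<le> \<theta> / (2 * Lg)"
    and subgrad: "\<forall>i\<in>{1..m}. \<forall>y. f i u + w i \<bullet> (y - u) \<le> f i y"
    and sum_subgrad: "(\<Sum>i=1..m. w i + Dh i u) = - p"
    and \<phi>_1: "\<phi> 1 = y - b *\<^sub>R Dg y"
    and \<phi>_step: "\<forall>i\<in>{1..m}. \<phi> (i + 1) = prox a (f i) (\<phi> i - a *\<^sub>R Dh i (\<phi> i))"
  shows "(norm (\<phi> (m + 1) - u))^2 + 2 * b * \<theta> * (g y - g u) + b * \<theta> / (2 * Lg) * (norm (Dg y))^2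
      + 1 / 2 * (\<Sum>i=1..m. (norm (\<phi> (i + 1) - \<phi> i))^2)
    \<le> (norm (y - u))^2 + 2 * a * (p \<bullet> (y - u)) + a^2 * (\<Sum>i=1..m. (norm (w i + Dh i u))^2) / \<eta>"
proof -
  define c where "c i = w i + Dh i u" for i
  define M where "M = real m * (real m + 1)"
  define N where "N = (norm (Dg y))^2"
  define SD where "SD = (\<Sum>i=1..m. (norm (\<phi> (i + 1) - \<phi> i))^2)"
  define C where "C = (\<Sum>i=1..m. (norm (w i + Dh i u))^2)"
  define CR where "CR = (\<Sum>i=1..m. c i \<bullet> (y - \<phi> (i + 1)))"
  have SD: "0 \<le> SD" by (simp add: SD_def sum_nonneg)
  have grad_step: "(norm (\<phi> 1 - u))^2 \<le> (norm (y - u))^2 - 2 * b * \<theta> * (g y - g u) - b * \<theta> / Lg * N"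
    unfolding \<phi>_1 N_def
    by (rule lipschitz_gradient_step_toward_minimizer[OF g_convex g_grad g_lip(2,1) g_min \<theta>(2) b])
  have prox_steps: "(norm (\<phi> (m + 1) - u))^2 \<le> (norm (\<phi> 1 - u))^2
      - (\<Sum>i=1..m. (1 - a * L i) * (norm (\<phi> (i + 1) - \<phi> i))^2)
      + 2 * a * (\<Sum>i=1..m. c i \<bullet> (u - \<phi> (i + 1)))"
    unfolding c_def by (rule incremental_prox_gradient_estimate[OF f_convex h_convex h_grad h_lip a(1) subgrad \<phi>_step])
  have "3 / 4 * SD \<le> (\<Sum>i=1..m. (1 - a * L i) * (norm (\<phi> (i + 1) - \<phi> i))^2)"
    unfolding SD_def sum_distrib_left using a(2) by (intro sum_mono mult_right_mono) auto
  moreover have "2 * a * (\<Sum>i=1..m. c i \<bullet> (u - \<phi> (i + 1))) = 2 * a * (p \<bullet> (y - u)) + 2 * a * CR"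
  proof -
    have "(\<Sum>i=1..m. c i \<bullet> (u - \<phi> (i + 1))) = (\<Sum>i=1..m. c i) \<bullet> (u - y) + CR"
      by (simp add: CR_def inner_sum_left inner_diff_right sum_subtractf)
    also have "(\<Sum>i=1..m. c i) \<bullet> (u - y) = p \<bullet> (y - u)"
      unfolding c_def sum_subgrad by (simp add: inner_diff_right)
    finally show ?thesis by (simp add: distrib_left)
  qed
  moreover have "2 * a * CR \<le> a^2 * C / \<eta> + \<eta> * M * (b^2 * N + SD)"
    using young_sum_inner_path_le[OF \<eta>(1), where a = a and c = c and m = m and x = y and \<phi> = \<phi>] \<phi>_1
    by (simp add: M_def N_def SD_def C_def CR_def c_def power_mult_distrib)
  moreover have "\<eta> * M * (b^2 * N + SD) \<le> b * \<theta> / (2 * Lg) * N + SD / 4"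
  proof -
    have "(M * \<eta> * b) * (b * N) \<le> \<theta> / (2 * Lg) * (b * N)"
      using \<eta>(3) b(1) by (intro mult_right_mono) (auto simp: M_def N_def)
    moreover have "(M * \<eta>) * SD \<le> 1 / 4 * SD"
      using \<eta>(2) SD by (intro mult_right_mono) (auto simp: M_def)
    ultimately show ?thesis by (simp add: algebra_simps power2_eq_square)
  qed
  moreover have "b * \<theta> / Lg * N = 2 * (b * \<theta> / (2 * Lg) * N)"
    by simp
  ultimately show ?thesis
    using grad_step prox_steps unfolding N_def[symmetric] SD_def[symmetric] C_def[symmetric] by linarith
qed

section \<open>The constraint set and the conjugate of the penalty\<close>

lemma argmin_set_eq_zero_set:
  assumes "\<forall>y. 0 \<le> g y" and "\<exists>y. g y = 0"
  shows "argmin_set g = {y. g y = 0}"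
  using assms unfolding argmin_set_def by (metis (mono_tags) antisym)

lemma convex_argmin_set:
  assumes "convex_on UNIV g"
  shows "convex (argmin_set g)"
  unfolding convex_def argmin_set_def
proof (intro ballI allI impI CollectI)
  fix a b y and s t :: real
  assume "a \<in> {x. \<forall>y. g x \<le> g y}" "b \<in> {x. \<forall>y. g x \<le> g y}" and st: "0 \<le> s" "0 \<le> t" "s + t = 1"
  then have "g a \<le> g y" "g b \<le> g y" by auto
  have "g (s *\<^sub>R a + t *\<^sub>R b) \<le> s * g a + t * g b"
    using convex_onD[OF assms, of t a b] st by (simp add: eq_diff_eq[of s 1 t, symmetric])
  also have "\<dots> \<le> g y"
    using convex_bound_le[OF \<open>g a \<le> g y\<close> \<open>g b \<le> g y\<close> st] .
  finally show "g (s *\<^sub>R a + t *\<^sub>R b) \<le> g y" .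
qed

lemma normal_cone_scaleR:
  assumes "p \<in> normal_cone X u" and "0 \<le> c"
  shows "c *\<^sub>R p \<in> normal_cone X u"
  using assms by (auto simp: normal_cone_def mult_nonneg_nonpos split: if_splits)

lemma convex_plus_smooth_segment_le:
  fixes f h :: "'a::real_inner \<Rightarrow> real"
  assumes convex: "convex_on UNIV f" and grad: "\<forall>y. (h has_derivative (\<lambda>v. Dh y \<bullet> v)) (at y)"
    and lip: "L-lipschitz_on UNIV Dh" and t: "0 \<le> t" "t \<le> 1"
  shows "f ((1 - t) *\<^sub>R u + t *\<^sub>R y) + h ((1 - t) *\<^sub>R u + t *\<^sub>R y)
    \<le> f u + h u + t * (f y - f u + Dh u \<bullet> (y - u)) + t^2 * (L / 2 * (norm (y - u))^2)"
proof -
  define z where "z = (1 - t) *\<^sub>R u + t *\<^sub>R y"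
  have z_u: "z - u = t *\<^sub>R (y - u)" by (simp add: z_def algebra_simps)
  have "f z \<le> (1 - t) * f u + t * f y"
    unfolding z_def using convex_onD[OF convex, of t u y] t by simp
  moreover have "h z \<le> h u + Dh u \<bullet> (z - u) + L / 2 * (norm (z - u))^2"
    by (rule lipschitz_gradient_descent_ineq[OF grad lip])
  moreover have "Dh u \<bullet> (z - u) = t * (Dh u \<bullet> (y - u))"
    "L / 2 * (norm (z - u))^2 = t^2 * (L / 2 * (norm (y - u))^2)"
    using t by (simp_all add: z_u power_mult_distrib)
  moreover have "(1 - t) * f u + t * f y + t * (Dh u \<bullet> (y - u)) = f u + t * (f y - f u + Dh u \<bullet> (y - u))"
    by (simp add: algebra_simps)
  ultimately show ?thesis unfolding z_def[symmetric] by linarith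
qed

text \<open>Minimality of \<open>u\<close> on the segment from \<open>u\<close> to \<open>y\<close>, at first order in the segment parameter.\<close>

lemma constrained_minimizer_linearized_ineq:
  fixes f h :: "nat \<Rightarrow> 'a::real_inner \<Rightarrow> real" and Dh :: "nat \<Rightarrow> 'a \<Rightarrow> 'a"
  assumes f_convex: "\<forall>i\<in>{1..m}. convex_on UNIV (f i)"
    and h_grad: "\<forall>i\<in>{1..m}. \<forall>y. (h i has_derivative (\<lambda>v. Dh i y \<bullet> v)) (at y)"
    and h_lip: "\<forall>i\<in>{1..m}. (L i)-lipschitz_on UNIV (Dh i)"
    and X: "convex X" and uX: "u \<in> X" and yX: "y \<in> X"
    and u_min: "\<forall>z\<in>X. (\<Sum>i\<in>{1..m}. f i u + h i u) \<le> (\<Sum>i\<in>{1..m}. f i z + h i z)"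
  shows "(\<Sum>i\<in>{1..m}. f i u) - (\<Sum>i\<in>{1..m}. Dh i u) \<bullet> (y - u) \<le> (\<Sum>i\<in>{1..m}. f i y)"
proof -
  define B where "B i = f i y - f i u + Dh i u \<bullet> (y - u)" for i
  define C where "C i = L i / 2 * (norm (y - u))^2" for i
  have "0 \<le> (\<Sum>i\<in>{1..m}. B i) + t * (\<Sum>i\<in>{1..m}. C i)" if t: "0 < t" "t < 1" for t
  proof -
    define z where "z = (1 - t) *\<^sub>R u + t *\<^sub>R y"
    have "(\<Sum>i\<in>{1..m}. f i u + h i u) \<le> (\<Sum>i\<in>{1..m}. f i z + h i z)"
      using u_min X uX yX t by (simp add: z_def convex_def)
    also have "\<dots> \<le> (\<Sum>i\<in>{1..m}. (f i u + h i u) + t * B i + t^2 * C i)"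
      using convex_plus_smooth_segment_le[OF bspec[OF f_convex] bspec[OF h_grad] bspec[OF h_lip]] t
      unfolding z_def B_def C_def by (intro sum_mono) auto
    also have "\<dots> = (\<Sum>i\<in>{1..m}. f i u + h i u) + t * ((\<Sum>i\<in>{1..m}. B i) + t * (\<Sum>i\<in>{1..m}. C i))"
      by (simp add: sum.distrib sum_distrib_left algebra_simps power2_eq_square)
    finally have "0 \<le> t * ((\<Sum>i\<in>{1..m}. B i) + t * (\<Sum>i\<in>{1..m}. C i))"
      by simp
    then show ?thesis using t by (simp add: zero_le_mult_iff)
  qed
  then have "0 \<le> (\<Sum>i\<in>{1..m}. B i)"
    by (rule nonneg_if_small_perturbations_nonneg)
      (auto simp: C_def intro!: sum_nonneg mult_nonneg_nonneg lipschitz_on_nonneg[OF h_lip[rule_format]])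
  then show ?thesis
    by (simp add: B_def sum.distrib sum_subtractf inner_sum_left)
qed

lemma constrained_minimizer_subdiff:
  fixes f h :: "nat \<Rightarrow> 'a::real_inner \<Rightarrow> real" and Dh :: "nat \<Rightarrow> 'a \<Rightarrow> 'a"
  assumes f_convex: "\<forall>i\<in>{1..m}. convex_on UNIV (f i)"
    and h_grad: "\<forall>i\<in>{1..m}. \<forall>y. (h i has_derivative (\<lambda>v. Dh i y \<bullet> v)) (at y)"
    and h_lip: "\<forall>i\<in>{1..m}. (L i)-lipschitz_on UNIV (Dh i)"
    and X: "convex X" and uX: "u \<in> X"
    and u_min: "\<forall>z\<in>X. (\<Sum>i\<in>{1..m}. f i u + h i u) \<le> (\<Sum>i\<in>{1..m}. f i z + h i z)"
  shows "- (\<Sum>i\<in>{1..m}. Dh i u) \<in> subdiff (\<lambda>z. ereal (\<Sum>i\<in>{1..m}. f i z) + indicator_fun X z) u"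
  unfolding subdiff_def
proof (intro CollectI conjI allI)
  show "\<bar>ereal (\<Sum>i\<in>{1..m}. f i u) + indicator_fun X u\<bar> \<noteq> \<infinity>"
    using uX by (simp add: indicator_fun_def)
next
  fix y
  show "ereal (\<Sum>i\<in>{1..m}. f i u) + indicator_fun X u + ereal (- (\<Sum>i\<in>{1..m}. Dh i u) \<bullet> (y - u))
      \<le> ereal (\<Sum>i\<in>{1..m}. f i y) + indicator_fun X y"
    using constrained_minimizer_linearized_ineq[OF f_convex h_grad h_lip X uX _ u_min, of y] uX
    by (cases "y \<in> X") (simp_all add: indicator_fun_def)
qed

lemma support_fun_normal_cone:
  assumes "u \<in> X" and "q \<in> normal_cone X u" and "0 \<le> c"
  shows "support_fun X (c *\<^sub>R q) = ereal (u \<bullet> (c *\<^sub>R q))"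
proof -
  have "y \<bullet> (c *\<^sub>R q) \<le> u \<bullet> (c *\<^sub>R q)" if "y \<in> X" for y
  proof -
    have "q \<bullet> (y - u) \<le> 0" using assms(1,2) that by (simp add: normal_cone_def)
    then have "c * (q \<bullet> (y - u)) \<le> 0" using assms(3) by (simp add: mult_nonneg_nonpos)
    then show ?thesis by (simp add: inner_diff_right inner_commute right_diff_distrib)
  qed
  then show ?thesis
    unfolding support_fun_def using \<open>u \<in> X\<close> by (intro antisym SUP_least SUP_upper2) auto
qed

lemma fenchel_young_ineq: "ereal (v \<bullet> y - g y) \<le> fconj g v"
  unfolding fconj_def by (rule SUP_upper) simp

text \<open>By the Fenchel--Young inequality the gap between conjugate and support function at \<open>q / \<beta> k\<close>
  dominates \<open>\<langle>q / \<beta> k, y - u\<rangle> - g y\<close> uniformly in \<open>y\<close>.\<close>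

lemma summable_bound_from_conjugate_gap:
  fixes g :: "'a::real_inner \<Rightarrow> real"
  assumes uX: "u \<in> X" and q: "q \<in> normal_cone X u" and gu: "g u = 0"
    and b: "\<forall>k. 0 < b k" and \<beta>: "\<forall>k. 0 < \<beta> k"
    and gap: "(\<Sum>k. ereal (b k) * (fconj g ((1 / \<beta> k) *\<^sub>R q) - support_fun X ((1 / \<beta> k) *\<^sub>R q))) < \<infinity>"
  obtains G where "\<forall>k. 0 \<le> G k" "summable (\<lambda>k. b k * G k)"
    "\<forall>k y. ((1 / \<beta> k) *\<^sub>R q) \<bullet> (y - u) - g y \<le> G k"
proof -
  define v where "v k = (1 / \<beta> k) *\<^sub>R q" for k
  define t where "t k = ereal (b k) * (fconj g (v k) - ereal (u \<bullet> v k))" for k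
  have conj_ge: "ereal (u \<bullet> v k) \<le> fconj g (v k)" for k
    using fenchel_young_ineq[of "v k" u g] gu by (simp add: inner_commute)
  have t_nonneg: "0 \<le> t k" for k
    using conj_ge[of k] b[rule_format, of k]
    by (cases "fconj g (v k)") (auto simp: t_def zero_le_mult_iff)
  have "t k = ereal (b k) * (fconj g ((1 / \<beta> k) *\<^sub>R q) - support_fun X ((1 / \<beta> k) *\<^sub>R q))" for k
    using support_fun_normal_cone[OF uX q, of "1 / \<beta> k"] \<beta>[rule_format, of k] by (simp add: t_def v_def)
  then have "t = (\<lambda>k. ereal (b k) * (fconj g ((1 / \<beta> k) *\<^sub>R q) - support_fun X ((1 / \<beta> k) *\<^sub>R q)))"
    by (rule ext)
  with gap have "suminf t \<noteq> \<infinity>" by simp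
  then have "t k \<noteq> \<infinity>" for k
    by (rule suminf_PInfty[of t, OF t_nonneg])
  have "fconj g (v k) \<noteq> \<infinity>" for k
  proof
    assume "fconj g (v k) = \<infinity>"
    then have "t k = \<infinity>" using b[rule_format, of k] by (simp add: t_def)
    with \<open>t k \<noteq> \<infinity>\<close> show False ..
  qed
  moreover have "fconj g (v k) \<noteq> - \<infinity>" for k
    using conj_ge[of k] by auto
  ultimately have "\<bar>fconj g (v k)\<bar> \<noteq> \<infinity>" for k
    by (cases "fconj g (v k)") auto
  define r where "r k = real_of_ereal (fconj g (v k))" for k
  have r: "fconj g (v k) = ereal (r k)" for k
    by (simp add: r_def ereal_real'[OF \<open>\<bar>fconj g (v k)\<bar> \<noteq> \<infinity>\<close>])
  define G where "G k = r k - u \<bullet> v k" for k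
  have "0 \<le> G k" for k using conj_ge[of k] by (simp add: G_def r)
  moreover have "summable (\<lambda>k. b k * G k)"
    using summable_real_of_ereal[OF t_nonneg \<open>suminf t \<noteq> \<infinity>\<close>] by (simp add: t_def r G_def)
  moreover have "v k \<bullet> (y - u) - g y \<le> G k" for k y
    using fenchel_young_ineq[of "v k" y g] by (simp add: r G_def inner_diff_right inner_commute)
  ultimately show thesis
    using that[of G] unfolding v_def by blast
qed

section \<open>A deterministic Robbins--Siegmund lemma\<close>

lemma robbins_siegmund:
  fixes E P \<delta> :: "nat \<Rightarrow> real"
  assumes E: "\<forall>k. 0 \<le> E k" and P: "\<forall>k\<ge>K. 0 \<le> P k" and \<delta>: "\<forall>k. 0 \<le> \<delta> k" "summable \<delta>"
    and step: "\<forall>k\<ge>K. E (Suc k) \<le> E k - P k + \<delta> k"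
  shows "convergent E" and "summable P"
proof -
  define E' where "E' n = E (n + K)" for n
  define P' where "P' n = P (n + K)" for n
  define \<delta>' where "\<delta>' n = \<delta> (n + K)" for n
  have step': "E' (Suc n) \<le> E' n - P' n + \<delta>' n" for n
    using step by (simp add: E'_def P'_def \<delta>'_def)
  have "summable \<delta>'" using \<delta>(2) unfolding \<delta>'_def by (subst summable_iff_shift)
  have partial: "(\<Sum>k<n. \<delta>' k) \<le> suminf \<delta>'" for n
    using \<open>summable \<delta>'\<close> \<delta> by (intro sum_le_suminf) (auto simp: \<delta>'_def)
  have sum_P'_le: "E' n + (\<Sum>k<n. P' k) \<le> E' 0 + (\<Sum>k<n. \<delta>' k)" for n
  proof (induction n)
    case (Suc n)
    then show ?case using step'[of n] by simp
  qed simp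
  have "(\<Sum>k\<le>n. P' k) \<le> E' 0 + suminf \<delta>'" for n
    using sum_P'_le[of "Suc n"] partial[of "Suc n"] E[rule_format, of "Suc n + K"]
    by (simp add: E'_def lessThan_Suc_atMost)
  then have "summable P'"
    using P by (intro bounded_imp_summable) (auto simp: P'_def)
  then show "summable P" unfolding P'_def by (subst (asm) summable_iff_shift)
  define W where "W n = E' n - (\<Sum>k<n. \<delta>' k)" for n
  have "W (Suc n) \<le> W n" for n
    using step'[of n] P[rule_format, of "n + K"] by (simp add: W_def P'_def)
  then have "decseq W" by (simp add: decseq_Suc_iff)
  moreover have "- suminf \<delta>' \<le> W n" for n
    using partial[of n] E[rule_format, of "n + K"] by (simp add: W_def E'_def)
  ultimately have "convergent W"
    by (metis Bseq_monoseq_convergent decseq_bounded decseq_imp_monoseq)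
  moreover have "convergent (\<lambda>n. \<Sum>k<n. \<delta>' k)"
    using \<open>summable \<delta>'\<close> by (simp add: summable_iff_convergent)
  ultimately have "convergent (\<lambda>n. W n + (\<Sum>k<n. \<delta>' k))" by (rule convergent_add)
  then have "convergent E'" by (simp add: W_def)
  then show "convergent E" unfolding E'_def by (simp add: convergent_ignore_initial_segment)
qed

lemma summable_shift_if_dominated:
  fixes a P :: "nat \<Rightarrow> real"
  assumes "summable P" and "0 < c" and "\<forall>k\<ge>K. 0 \<le> a k \<and> c * a k \<le> P k"
  shows "summable (\<lambda>k. a (k + 1))"
proof -
  have "summable a"
  proof (rule summable_comparison_test')
    show "summable (\<lambda>k. P k / c)" using assms(1) by (rule summable_divide)
    show "norm (a k) \<le> P k / c" if "K \<le> k" for k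
      using assms(2,3) that by (simp add: field_simps)
  qed
  then show ?thesis by (subst summable_iff_shift)
qed

lemma tendsto_zero_if_dominated:
  fixes a P :: "nat \<Rightarrow> real"
  assumes "P \<longlonglongrightarrow> 0" and "0 < c" and "\<forall>k\<ge>K. 0 \<le> a k \<and> c * a k \<le> P k"
  shows "a \<longlonglongrightarrow> 0"
proof (rule Lim_null_comparison)
  show "eventually (\<lambda>k. norm (a k) \<le> P k / c) sequentially"
    unfolding eventually_sequentially using assms(2,3) by (intro exI[of _ K]) (auto simp: field_simps)
  show "(\<lambda>k. P k / c) \<longlonglongrightarrow> 0"
    using tendsto_divide_zero[OF assms(1)] .
qed

section \<open>The scheme\<close>

text \<open>Only the square-summability half of (H2) is needed below.\<close>

locale incremental_penalty_scheme =
  fixes m :: nat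
    and f h :: "nat \<Rightarrow> 'a::euclidean_space \<Rightarrow> real"
    and Dh :: "nat \<Rightarrow> 'a \<Rightarrow> 'a"
    and L :: "nat \<Rightarrow> real"
    and g :: "'a \<Rightarrow> real" and Dg :: "'a \<Rightarrow> 'a" and Lg :: real
    and \<alpha> \<beta> :: "nat \<Rightarrow> real"
    and x :: "nat \<Rightarrow> 'a" and \<phi> :: "nat \<Rightarrow> nat \<Rightarrow> 'a"
  assumes m_pos: "m \<ge> 1"
    and f_convex: "\<forall>i\<in>{1..m}. convex_on UNIV (f i)"
    and h_convex: "\<forall>i\<in>{1..m}. convex_on UNIV (h i)"
    and h_grad: "\<forall>i\<in>{1..m}. \<forall>y. (h i has_derivative (\<lambda>v. Dh i y \<bullet> v)) (at y)"
    and h_lip: "\<forall>i\<in>{1..m}. L i > 0 \<and> (L i)-lipschitz_on UNIV (Dh i)"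
    and g_convex: "convex_on UNIV g"
    and g_grad: "\<forall>y. (g has_derivative (\<lambda>v. Dg y \<bullet> v)) (at y)"
    and g_lip: "Lg > 0" "Lg-lipschitz_on UNIV Dg"
    and g_min: "(\<exists>y. g y = 0) \<and> (\<forall>y. g y \<ge> 0)"
    and \<alpha>_pos: "\<forall>k\<ge>1. \<alpha> k > 0" and \<beta>_pos: "\<forall>k\<ge>1. \<beta> k > 0"
    and \<phi>_1: "\<forall>k\<ge>1. \<phi> k 1 = x k - (\<alpha> k * \<beta> k) *\<^sub>R Dg (x k)"
    and \<phi>_step: "\<forall>k\<ge>1. \<forall>i\<in>{1..m}.
        \<phi> k (i + 1) = prox (\<alpha> k) (f i) (\<phi> k i - \<alpha> k *\<^sub>R Dh i (\<phi> k i))"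
    and x_step: "\<forall>k\<ge>1. x (k + 1) = \<phi> k (m + 1)"
    and H1: "\<forall>y. subdiff (\<lambda>z. ereal (\<Sum>i\<in>{1..m}. f i z) + indicator_fun (argmin_set g) z) y
        = {(\<Sum>i\<in>{1..m}. w i) + p | w p.
            (\<forall>i\<in>{1..m}. w i \<in> subdiff (\<lambda>z. ereal (f i z)) y) \<and> p \<in> normal_cone (argmin_set g) y}"
    and H2: "summable (\<lambda>k. (\<alpha> (k + 1))^2)"
    and H3: "0 < liminf (\<lambda>k. ereal (\<alpha> k * \<beta> k))"
            "limsup (\<lambda>k. ereal (\<alpha> k * \<beta> k)) < ereal (2 / Lg)"
    and H4: "\<forall>p \<in> (\<Union>y\<in>argmin_set g. normal_cone (argmin_set g) y).
        (\<Sum>k. ereal (\<alpha> (k + 1) * \<beta> (k + 1)) *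
            (fconj g ((1 / \<beta> (k + 1)) *\<^sub>R p) - support_fun (argmin_set g) ((1 / \<beta> (k + 1)) *\<^sub>R p))) < \<infinity>"
begin

definition solutions :: "'a set" where
  "solutions = {y \<in> argmin_set g. \<forall>z\<in>argmin_set g.
      (\<Sum>i\<in>{1..m}. f i y + h i y) \<le> (\<Sum>i\<in>{1..m}. f i z + h i z)}"

lemma g_nonneg: "0 \<le> g y"
  using g_min by blast

lemma h_lipschitz: "\<forall>i\<in>{1..m}. (L i)-lipschitz_on UNIV (Dh i)"
  using h_lip by blast

lemma argmin_g: "argmin_set g = {y. g y = 0}"
  using g_min by (intro argmin_set_eq_zero_set) auto

lemma dual_certificate:
  assumes "u \<in> solutions"
  obtains w p where "\<forall>i\<in>{1..m}. \<forall>y. f i u + w i \<bullet> (y - u) \<le> f i y"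
    and "p \<in> normal_cone (argmin_set g) u" and "(\<Sum>i=1..m. w i + Dh i u) = - p"
proof -
  have "- (\<Sum>i\<in>{1..m}. Dh i u) \<in> subdiff (\<lambda>z. ereal (\<Sum>i\<in>{1..m}. f i z) + indicator_fun (argmin_set g) z) u"
    using assms
    by (intro constrained_minimizer_subdiff[OF f_convex h_grad h_lipschitz convex_argmin_set[OF g_convex]])
      (auto simp: solutions_def)
  then obtain w p where wp: "- (\<Sum>i\<in>{1..m}. Dh i u) = (\<Sum>i\<in>{1..m}. w i) + p"
      "\<forall>i\<in>{1..m}. w i \<in> subdiff (\<lambda>z. ereal (f i z)) u" "p \<in> normal_cone (argmin_set g) u"
    using H1 by auto
  have "\<forall>i\<in>{1..m}. \<forall>y. f i u + w i \<bullet> (y - u) \<le> f i y"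
    using wp(2) by (auto simp: subdiff_def)
  moreover have "(\<Sum>i\<in>{1..m}. w i) = - (\<Sum>i\<in>{1..m}. Dh i u) - p"
    using wp(1) by (metis add_diff_cancel_right')
  then have "(\<Sum>i=1..m. w i + Dh i u) = - p"
    by (simp add: sum.distrib)
  ultimately show thesis using that wp(3) by blast
qed

lemma step_size_tendsto_zero: "\<alpha> \<longlonglongrightarrow> 0"
proof -
  have "(\<lambda>k. sqrt ((\<alpha> (k + 1))^2)) \<longlonglongrightarrow> sqrt 0"
    by (intro tendsto_real_sqrt summable_LIMSEQ_zero H2)
  then have "(\<lambda>k. \<alpha> (k + 1)) \<longlonglongrightarrow> 0"
    by (simp add: tendsto_rabs_zero_iff)
  then show ?thesis by (rule LIMSEQ_offset)
qed

lemma eventually_step_size_bounds: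
  obtains \<beta>0 B where "0 < \<beta>0" "B < 2 / Lg"
    "eventually (\<lambda>k. \<beta>0 < \<alpha> k * \<beta> k \<and> \<alpha> k * \<beta> k < B \<and> (\<forall>i\<in>{1..m}. \<alpha> k * L i \<le> 1 / 4)) sequentially"
proof -
  obtain \<beta>0 where \<beta>0: "0 < ereal \<beta>0" "ereal \<beta>0 < liminf (\<lambda>k. ereal (\<alpha> k * \<beta> k))"
    using ereal_dense2[OF H3(1)] by blast
  obtain B where B: "limsup (\<lambda>k. ereal (\<alpha> k * \<beta> k)) < ereal B" "ereal B < ereal (2 / Lg)"
    using ereal_dense2[OF H3(2)] by blast
  have "eventually (\<lambda>k. \<alpha> k * L i \<le> 1 / 4) sequentially" if "i \<in> {1..m}" for i
  proof -
    have "0 < L i" using h_lip that by blast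
    then show ?thesis
      using order_tendstoD(2)[OF step_size_tendsto_zero, of "1 / (4 * L i)"]
      by (auto elim!: eventually_mono simp: field_simps)
  qed
  then have "eventually (\<lambda>k. \<forall>i\<in>{1..m}. \<alpha> k * L i \<le> 1 / 4) sequentially"
    by (simp add: eventually_ball_finite)
  moreover have "eventually (\<lambda>k. ereal \<beta>0 < ereal (\<alpha> k * \<beta> k)) sequentially"
    using \<beta>0(2) by (rule less_LiminfD)
  moreover have "eventually (\<lambda>k. ereal (\<alpha> k * \<beta> k) < ereal B) sequentially"
    using B(1) by (rule Limsup_lessD)
  ultimately have "eventually (\<lambda>k. \<beta>0 < \<alpha> k * \<beta> k \<and> \<alpha> k * \<beta> k < B
      \<and> (\<forall>i\<in>{1..m}. \<alpha> k * L i \<le> 1 / 4)) sequentially"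
    by eventually_elim auto
  then show thesis
    using that[of \<beta>0 B] \<beta>0(1) B(2) by simp
qed

end

text \<open>The regime, reached after finitely many iterations, in which the step sizes obey the
  quantitative bounds of the one-step estimate: \<open>\<theta>\<close> measures the gap between
  \<open>limsup \<alpha> k \<beta> k\<close> and \<open>2 / Lg\<close>, \<open>\<eta>\<close> is the weight in Young's inequality.\<close>

locale incremental_penalty_scheme_tail = incremental_penalty_scheme +
  fixes \<theta> \<eta> \<beta>0 :: real and K :: nat
  assumes \<theta>: "0 < \<theta>" "\<theta> \<le> 1" and \<beta>0: "0 < \<beta>0"
    and \<eta>: "0 < \<eta>" "real m * (real m + 1) * \<eta> \<le> 1 / 4"
    and K: "1 \<le> K"
    and tail_bounds: "\<forall>k\<ge>K. \<beta>0 \<le> \<alpha> k * \<beta> k \<and> \<alpha> k * \<beta> k \<le> 2 * (1 - \<theta>) / Lg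
      \<and> real m * (real m + 1) * \<eta> * (\<alpha> k * \<beta> k) \<le> \<theta> / (2 * Lg) \<and> (\<forall>i\<in>{1..m}. \<alpha> k * L i \<le> 1 / 4)"

lemma (in incremental_penalty_scheme) tail_constants_exist:
  "\<exists>\<theta> \<eta> \<beta>0 K. incremental_penalty_scheme_tail m f h Dh L g Dg Lg \<alpha> \<beta> x \<phi> \<theta> \<eta> \<beta>0 K"
proof -
  obtain \<beta>0 B N where \<beta>0: "0 < \<beta>0" and B: "B < 2 / Lg"
    and N: "\<forall>k\<ge>N. \<beta>0 < \<alpha> k * \<beta> k \<and> \<alpha> k * \<beta> k < B \<and> (\<forall>i\<in>{1..m}. \<alpha> k * L i \<le> 1 / 4)"
    using eventually_step_size_bounds unfolding eventually_sequentially by metis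
  define K where "K = max 1 N"
  define \<theta> where "\<theta> = (2 - Lg * B) / 2"
  define M where "M = real m * (real m + 1)"
  define \<eta> where "\<eta> = min (1 / (4 * M)) (\<theta> / (2 * Lg * B * M))"
  have "0 < B" using N[rule_format, of N] \<beta>0 by linarith
  have M: "0 < M" using m_pos by (simp add: M_def)
  have \<theta>: "0 < \<theta>" "\<theta> \<le> 1" and \<theta>B: "2 * (1 - \<theta>) / Lg = B"
    using B \<open>0 < B\<close> g_lip(1) by (simp_all add: \<theta>_def field_simps)
  have "0 < \<eta>" using M \<theta> \<open>0 < B\<close> g_lip(1) by (simp add: \<eta>_def)
  moreover have "M * \<eta> \<le> 1 / 4"
  proof -
    have "M * \<eta> \<le> M * (1 / (4 * M))"
      using M by (intro mult_left_mono) (auto simp: \<eta>_def)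
    then show ?thesis using M by simp
  qed
  moreover have "M * \<eta> * b \<le> \<theta> / (2 * Lg)" if "0 < b" "b < B" for b
  proof -
    have "M * \<eta> * b \<le> M * \<eta> * B"
      using that M \<open>0 < \<eta>\<close> by (intro mult_left_mono) auto
    also have "\<dots> \<le> M * (\<theta> / (2 * Lg * B * M)) * B"
      using M \<open>0 < B\<close> by (intro mult_right_mono mult_left_mono) (auto simp: \<eta>_def)
    also have "\<dots> = \<theta> / (2 * Lg)"
      using M \<open>0 < B\<close> by (simp add: field_simps)
    finally show ?thesis .
  qed
  ultimately have "incremental_penalty_scheme_tail m f h Dh L g Dg Lg \<alpha> \<beta> x \<phi> \<theta> \<eta> \<beta>0 K"
    using N \<theta> \<theta>B \<beta>0 \<beta>0[THEN order.strict_trans]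
    by unfold_locales (auto simp: K_def M_def less_imp_le)
  then show ?thesis by blast
qed

context incremental_penalty_scheme_tail
begin

definition dissipation :: "nat \<Rightarrow> real" where
  "dissipation k = \<alpha> k * \<beta> k * \<theta> * g (x k) + \<alpha> k * \<beta> k * \<theta> / (2 * Lg) * (norm (Dg (x k)))^2
    + 1 / 2 * (\<Sum>i=1..m. (norm (\<phi> k (i + 1) - \<phi> k i))^2)"

lemma dissipation_bounds:
  assumes "K \<le> k"
  shows "0 \<le> \<alpha> k * \<beta> k * g (x k) \<and> \<theta> * (\<alpha> k * \<beta> k * g (x k)) \<le> dissipation k"
    and "0 \<le> \<alpha> k * \<beta> k * (norm (Dg (x k)))^2
      \<and> \<theta> / (2 * Lg) * (\<alpha> k * \<beta> k * (norm (Dg (x k)))^2) \<le> dissipation k"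
    and "0 \<le> (\<Sum>i=1..m. (norm (\<phi> k (i + 1) - \<phi> k i))^2)
      \<and> 1 / 2 * (\<Sum>i=1..m. (norm (\<phi> k (i + 1) - \<phi> k i))^2) \<le> dissipation k"
proof -
  have "0 \<le> \<alpha> k * \<beta> k" using tail_bounds \<beta>0 assms by force
  then have "0 \<le> \<alpha> k * \<beta> k * g (x k)" "0 \<le> \<alpha> k * \<beta> k * (norm (Dg (x k)))^2"
    "0 \<le> (\<Sum>i=1..m. (norm (\<phi> k (i + 1) - \<phi> k i))^2)"
    using g_nonneg by (simp_all add: sum_nonneg)
  moreover from this have "0 \<le> \<theta> * (\<alpha> k * \<beta> k * g (x k))"
    "0 \<le> \<theta> / (2 * Lg) * (\<alpha> k * \<beta> k * (norm (Dg (x k)))^2)"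
    using \<theta> g_lip(1) by simp_all
  ultimately show "0 \<le> \<alpha> k * \<beta> k * g (x k) \<and> \<theta> * (\<alpha> k * \<beta> k * g (x k)) \<le> dissipation k"
    "0 \<le> \<alpha> k * \<beta> k * (norm (Dg (x k)))^2
      \<and> \<theta> / (2 * Lg) * (\<alpha> k * \<beta> k * (norm (Dg (x k)))^2) \<le> dissipation k"
    "0 \<le> (\<Sum>i=1..m. (norm (\<phi> k (i + 1) - \<phi> k i))^2)
      \<and> 1 / 2 * (\<Sum>i=1..m. (norm (\<phi> k (i + 1) - \<phi> k i))^2) \<le> dissipation k"
    unfolding dissipation_def by (simp_all add: algebra_simps)
qed

lemma fejer_step:
  assumes k: "K \<le> k" and u: "g u = 0"
    and subgrad: "\<forall>i\<in>{1..m}. \<forall>y. f i u + w i \<bullet> (y - u) \<le> f i y"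
    and sum_subgrad: "(\<Sum>i=1..m. w i + Dh i u) = - p"
    and gap: "((1 / \<beta> k) *\<^sub>R ((2 / \<theta>) *\<^sub>R p)) \<bullet> (x k - u) - g (x k) \<le> G"
  shows "(norm (x (Suc k) - u))^2 \<le> (norm (x k - u))^2 - dissipation k
    + (\<alpha> k * \<beta> k * \<theta> * G + (\<alpha> k)^2 * (\<Sum>i=1..m. (norm (w i + Dh i u))^2) / \<eta>)"
proof -
  have k1: "1 \<le> k" using K k by simp
  have \<alpha>k: "0 < \<alpha> k" and \<beta>k: "0 < \<beta> k" using \<alpha>_pos \<beta>_pos k1 by auto
  then have "0 \<le> \<alpha> k * \<beta> k" by simp
  obtain bounds: "\<alpha> k * \<beta> k \<le> 2 * (1 - \<theta>) / Lg"
      "real m * (real m + 1) * \<eta> * (\<alpha> k * \<beta> k) \<le> \<theta> / (2 * Lg)" "\<forall>i\<in>{1..m}. \<alpha> k * L i \<le> 1 / 4"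
    using tail_bounds k by blast
  have "\<forall>y. g u \<le> g y" using u g_nonneg by simp
  from penalized_incremental_step_estimate[OF f_convex h_convex h_grad h_lipschitz g_convex g_grad g_lip
      this \<alpha>k bounds(3) \<theta> \<open>0 \<le> \<alpha> k * \<beta> k\<close> bounds(1) \<eta> bounds(2) subgrad sum_subgrad]
  have estimate: "(norm (x (Suc k) - u))^2 + 2 * (\<alpha> k * \<beta> k) * \<theta> * g (x k)
      + \<alpha> k * \<beta> k * \<theta> / (2 * Lg) * (norm (Dg (x k)))^2
      + 1 / 2 * (\<Sum>i=1..m. (norm (\<phi> k (i + 1) - \<phi> k i))^2)
    \<le> (norm (x k - u))^2 + 2 * \<alpha> k * (p \<bullet> (x k - u))
      + (\<alpha> k)^2 * (\<Sum>i=1..m. (norm (w i + Dh i u))^2) / \<eta>"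
    using \<phi>_1 \<phi>_step x_step k1 u by simp
  have "\<alpha> k * \<beta> k * \<theta> * (1 / \<beta> k * (2 / \<theta> * (p \<bullet> (x k - u))) - g (x k)) \<le> \<alpha> k * \<beta> k * \<theta> * G"
    using gap \<alpha>k \<beta>k \<theta> by (intro mult_left_mono) auto
  also have "\<alpha> k * \<beta> k * \<theta> * (1 / \<beta> k * (2 / \<theta> * (p \<bullet> (x k - u))) - g (x k))
      = 2 * \<alpha> k * (p \<bullet> (x k - u)) - \<alpha> k * \<beta> k * \<theta> * g (x k)"
    using \<beta>k \<theta> by (simp add: field_simps)
  finally have "2 * \<alpha> k * (p \<bullet> (x k - u)) - \<alpha> k * \<beta> k * \<theta> * g (x k) \<le> \<alpha> k * \<beta> k * \<theta> * G" .
  moreover have "2 * (\<alpha> k * \<beta> k) * \<theta> * g (x k) = 2 * (\<alpha> k * \<beta> k * \<theta> * g (x k))"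
    by simp
  ultimately show ?thesis
    using estimate unfolding dissipation_def by simp
qed

text \<open>Hypothesis (H4) enters only here, through the normal vector \<open>(2 / \<theta>) p\<close> attached to \<open>u\<close>:
  it pays for the cross term \<open>2 \<alpha> k \<langle>p, x k - u\<rangle>\<close> of the one-step estimate.\<close>

lemma fejer_inequality:
  assumes "u \<in> solutions"
  obtains \<delta> where "\<forall>k. 0 \<le> \<delta> k" "summable \<delta>"
    "\<forall>k\<ge>K. (norm (x (Suc k) - u))^2 \<le> (norm (x k - u))^2 - dissipation k + \<delta> k"
proof -
  have uX: "u \<in> argmin_set g" and gu: "g u = 0"
    using assms argmin_g by (auto simp: solutions_def)
  obtain w p where subgrad: "\<forall>i\<in>{1..m}. \<forall>y. f i u + w i \<bullet> (y - u) \<le> f i y"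
    and p: "p \<in> normal_cone (argmin_set g) u" and sum_subgrad: "(\<Sum>i=1..m. w i + Dh i u) = - p"
    using dual_certificate[OF assms] .
  define q where "q = (2 / \<theta>) *\<^sub>R p"
  have q: "q \<in> normal_cone (argmin_set g) u"
    unfolding q_def using \<theta> by (intro normal_cone_scaleR[OF p]) auto
  have gap: "(\<Sum>k. ereal (\<alpha> (k + 1) * \<beta> (k + 1)) * (fconj g ((1 / \<beta> (k + 1)) *\<^sub>R q)
      - support_fun (argmin_set g) ((1 / \<beta> (k + 1)) *\<^sub>R q))) < \<infinity>"
    using H4 uX q by blast
  have "\<forall>k. 0 < \<alpha> (k + 1) * \<beta> (k + 1)" "\<forall>k. 0 < \<beta> (k + 1)"
    using \<alpha>_pos \<beta>_pos by simp_all
  then obtain G where G: "\<forall>k. 0 \<le> G k" "summable (\<lambda>k. \<alpha> (k + 1) * \<beta> (k + 1) * G k)"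
      "\<forall>k y. ((1 / \<beta> (k + 1)) *\<^sub>R q) \<bullet> (y - u) - g y \<le> G k"
    using summable_bound_from_conjugate_gap[OF uX q gu _ _ gap] by blast
  define C where "C = (\<Sum>i=1..m. (norm (w i + Dh i u))^2)"
  define \<delta> where "\<delta> k = (if k = 0 then 0 else \<alpha> k * \<beta> k * \<theta> * G (k - 1) + (\<alpha> k)^2 * C / \<eta>)" for k
  have "0 \<le> \<delta> k" for k
  proof (cases "k = 0")
    case False
    then have "0 < \<alpha> k" "0 < \<beta> k" using \<alpha>_pos \<beta>_pos by auto
    then show ?thesis using G(1) \<theta> \<eta>(1) by (simp add: \<delta>_def C_def sum_nonneg)
  qed (simp add: \<delta>_def)
  moreover have "summable \<delta>"
  proof -
    have "summable (\<lambda>k. \<theta> * (\<alpha> (k + 1) * \<beta> (k + 1) * G k) + C / \<eta> * (\<alpha> (k + 1))^2)"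
      by (intro summable_add summable_mult G(2) H2)
    then show ?thesis
      by (subst summable_Suc_iff[symmetric]) (simp add: \<delta>_def algebra_simps)
  qed
  moreover have "(norm (x (Suc k) - u))^2 \<le> (norm (x k - u))^2 - dissipation k + \<delta> k" if "K \<le> k" for k
  proof -
    have "1 \<le> k" using K that by simp
    then have "((1 / \<beta> k) *\<^sub>R q) \<bullet> (x k - u) - g (x k) \<le> G (k - 1)"
      using G(3) by (metis le_add_diff_inverse2)
    from fejer_step[OF that gu subgrad sum_subgrad this[unfolded q_def]] \<open>1 \<le> k\<close>
    show ?thesis by (simp add: \<delta>_def C_def)
  qed
  ultimately show thesis using that by blast
qed

lemma convergent_dist_sq_and_summable_dissipation:
  assumes "u \<in> solutions"
  shows "convergent (\<lambda>k. (norm (x k - u))^2)" and "summable dissipation"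
proof -
  obtain \<delta> where \<delta>: "\<forall>k. 0 \<le> \<delta> k" "summable \<delta>"
    and step: "\<forall>k\<ge>K. (norm (x (Suc k) - u))^2 \<le> (norm (x k - u))^2 - dissipation k + \<delta> k"
    using fejer_inequality[OF assms] .
  have "\<forall>k\<ge>K. 0 \<le> dissipation k"
    using dissipation_bounds(3) by fastforce
  with robbins_siegmund[where E = "\<lambda>k. (norm (x k - u))^2" and P = dissipation] \<delta> step
  show "convergent (\<lambda>k. (norm (x k - u))^2)" and "summable dissipation" by simp_all
qed

lemma quasi_fejer_solutions: "quasi_fejer (\<lambda>k. x (k + 1)) solutions"
  unfolding quasi_fejer_def
proof
  fix u assume "u \<in> solutions"
  then obtain \<delta> where \<delta>: "\<forall>k. 0 \<le> \<delta> k" "summable \<delta>"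
    and step: "\<forall>k\<ge>K. (norm (x (Suc k) - u))^2 \<le> (norm (x k - u))^2 - dissipation k + \<delta> k"
    by (rule fejer_inequality)
  have "(norm (x (Suc k + 1) - u))^2 \<le> (norm (x (k + 1) - u))^2 + \<delta> (k + 1)" if "K \<le> k" for k
  proof -
    have "0 \<le> dissipation (k + 1)"
      using dissipation_bounds(3)[of "k + 1"] that by linarith
    moreover have "K \<le> k + 1" using that by simp
    ultimately show ?thesis using step[rule_format, of "k + 1"] by simp
  qed
  moreover have "summable (\<lambda>k. \<delta> (k + 1))" using \<delta>(2) by (subst summable_iff_shift)
  ultimately show "\<exists>\<delta>::nat \<Rightarrow> real. (\<forall>k. 0 \<le> \<delta> k) \<and> summable \<delta> \<and>
      (\<exists>k0. \<forall>k\<ge>k0. (norm (x (Suc k + 1) - u))^2 \<le> (norm (x (k + 1) - u))^2 + \<delta> k)"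
    using \<delta>(1) by (intro exI[of _ "\<lambda>k. \<delta> (k + 1)"]) auto
qed

lemma convergent_dist:
  assumes "u \<in> solutions"
  shows "convergent (\<lambda>k. norm (x k - u))"
proof -
  obtain l where "(\<lambda>k. (norm (x k - u))^2) \<longlonglongrightarrow> l"
    using convergent_dist_sq_and_summable_dissipation(1)[OF assms] convergent_def by blast
  from tendsto_real_sqrt[OF this] show ?thesis
    by (auto simp: convergent_def)
qed

lemma summable_dissipation:
  assumes "solutions \<noteq> {}"
  shows "summable dissipation"
  using assms convergent_dist_sq_and_summable_dissipation(2) by blast

lemma summable_weighted_residuals:
  assumes "solutions \<noteq> {}"
  shows "summable (\<lambda>k. \<alpha> (k + 1) * \<beta> (k + 1) * g (x (k + 1)))"
    and "summable (\<lambda>k. \<alpha> (k + 1) * \<beta> (k + 1) * (norm (Dg (x (k + 1))))^2)"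
    and "summable (\<lambda>k. \<Sum>i\<in>{1..m}. (norm (\<phi> (k + 1) (i + 1) - \<phi> (k + 1) i))^2)"
proof -
  note P = summable_dissipation[OF assms]
  show "summable (\<lambda>k. \<alpha> (k + 1) * \<beta> (k + 1) * g (x (k + 1)))"
    using dissipation_bounds(1) \<theta>(1)
    by (intro summable_shift_if_dominated[OF P, where a = "\<lambda>k. \<alpha> k * \<beta> k * g (x k)"]) auto
  show "summable (\<lambda>k. \<alpha> (k + 1) * \<beta> (k + 1) * (norm (Dg (x (k + 1))))^2)"
    using dissipation_bounds(2) \<theta>(1) g_lip(1)
    by (intro summable_shift_if_dominated[OF P, where a = "\<lambda>k. \<alpha> k * \<beta> k * (norm (Dg (x k)))^2"
          and c = "\<theta> / (2 * Lg)" and K = K]) auto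
  show "summable (\<lambda>k. \<Sum>i\<in>{1..m}. (norm (\<phi> (k + 1) (i + 1) - \<phi> (k + 1) i))^2)"
    using dissipation_bounds(3)
    by (intro summable_shift_if_dominated[OF P,
          where a = "\<lambda>k. \<Sum>i\<in>{1..m}. (norm (\<phi> k (i + 1) - \<phi> k i))^2" and c = "1 / 2" and K = K]) auto
qed

lemma dissipation_tendsto_zero:
  assumes "solutions \<noteq> {}"
  shows "dissipation \<longlonglongrightarrow> 0"
  using summable_dissipation[OF assms] by (rule summable_LIMSEQ_zero)

lemma penalty_tendsto_zero:
  assumes "solutions \<noteq> {}"
  shows "(\<lambda>k. g (x k)) \<longlonglongrightarrow> 0"
proof -
  have "\<theta> * \<beta>0 * g (x k) \<le> dissipation k" if "K \<le> k" for k
  proof -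
    have "\<beta>0 * g (x k) \<le> \<alpha> k * \<beta> k * g (x k)"
      using tail_bounds that g_nonneg by (intro mult_right_mono) auto
    then have "\<theta> * (\<beta>0 * g (x k)) \<le> \<theta> * (\<alpha> k * \<beta> k * g (x k))"
      using \<theta>(1) by (intro mult_left_mono) auto
    then show ?thesis
      using dissipation_bounds(1)[OF that] mult.assoc[of \<theta> \<beta>0 "g (x k)"] by linarith
  qed
  then show ?thesis
    using \<theta>(1) \<beta>0 g_nonneg
    by (intro tendsto_zero_if_dominated[OF dissipation_tendsto_zero[OF assms], where K = K
          and c = "\<theta> * \<beta>0"]) auto
qed

lemma gradient_tendsto_zero:
  assumes "solutions \<noteq> {}"
  shows "(\<lambda>k. norm (Dg (x k))) \<longlonglongrightarrow> 0"
proof -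
  have "\<theta> / (2 * Lg) * \<beta>0 * (norm (Dg (x k)))^2 \<le> dissipation k" if "K \<le> k" for k
  proof -
    have "\<beta>0 * (norm (Dg (x k)))^2 \<le> \<alpha> k * \<beta> k * (norm (Dg (x k)))^2"
      using tail_bounds that by (intro mult_right_mono) auto
    then have "\<theta> / (2 * Lg) * (\<beta>0 * (norm (Dg (x k)))^2)
        \<le> \<theta> / (2 * Lg) * (\<alpha> k * \<beta> k * (norm (Dg (x k)))^2)"
      using \<theta>(1) g_lip(1) by (intro mult_left_mono) auto
    then show ?thesis
      using dissipation_bounds(2)[OF that] mult.assoc[of "\<theta> / (2 * Lg)" \<beta>0 "(norm (Dg (x k)))^2"]
      by linarith
  qed
  then have "(\<lambda>k. (norm (Dg (x k)))^2) \<longlonglongrightarrow> 0"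
    using \<theta>(1) \<beta>0 g_lip(1)
    by (intro tendsto_zero_if_dominated[OF dissipation_tendsto_zero[OF assms], where K = K
          and c = "\<theta> / (2 * Lg) * \<beta>0"]) auto
  from tendsto_real_sqrt[OF this] show ?thesis by simp
qed

lemma increments_tendsto_zero:
  assumes "solutions \<noteq> {}"
  shows "(\<lambda>k. \<Sum>i\<in>{1..m}. (norm (\<phi> k (i + 1) - \<phi> k i))^2) \<longlonglongrightarrow> 0"
  using dissipation_bounds(3)
  by (intro tendsto_zero_if_dominated[OF dissipation_tendsto_zero[OF assms], where K = K
        and c = "1 / 2"]) auto

lemma gradient_step_tendsto_zero:
  assumes "solutions \<noteq> {}"
  shows "(\<lambda>k. norm (x k - \<phi> k 1)) \<longlonglongrightarrow> 0"
proof -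
  have "norm (norm (x k - \<phi> k 1)) \<le> 2 * (1 - \<theta>) / Lg * norm (Dg (x k))" if "K \<le> k" for k
  proof -
    have "x k - \<phi> k 1 = (\<alpha> k * \<beta> k) *\<^sub>R Dg (x k)"
      using \<phi>_1 K that by simp
    then have "norm (x k - \<phi> k 1) = \<alpha> k * \<beta> k * norm (Dg (x k))"
      using tail_bounds that \<beta>0 by force
    also have "\<dots> \<le> 2 * (1 - \<theta>) / Lg * norm (Dg (x k))"
      using tail_bounds that by (intro mult_right_mono) auto
    finally show ?thesis by simp
  qed
  then have "eventually (\<lambda>k. norm (norm (x k - \<phi> k 1)) \<le> 2 * (1 - \<theta>) / Lg * norm (Dg (x k))) sequentially"
    unfolding eventually_sequentially by blast
  then show ?thesis
    by (rule Lim_null_comparison) (rule tendsto_mult_right_zero[OF gradient_tendsto_zero[OF assms]])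
qed

lemma cluster_point_in_argmin:
  assumes "solutions \<noteq> {}" and "strict_mono r" and "(x \<circ> r) \<longlonglongrightarrow> z"
  shows "z \<in> argmin_set g"
proof -
  have "isCont g z"
    using has_derivative_continuous[OF g_grad[rule_format, of z]] by simp
  then have "(\<lambda>n. g ((x \<circ> r) n)) \<longlonglongrightarrow> g z"
    using assms(3) isCont_tendsto_compose by blast
  moreover have "(\<lambda>n. g ((x \<circ> r) n)) \<longlonglongrightarrow> 0"
    using LIMSEQ_subseq_LIMSEQ[OF penalty_tendsto_zero[OF assms(1)] assms(2)] by (simp add: o_def)
  ultimately have "g z = 0" by (rule LIMSEQ_unique)
  then show ?thesis using argmin_g by simp
qed

end

theorem lemmaA2:
  fixes m :: nat
    and f h :: "nat \<Rightarrow> 'a::euclidean_space \<Rightarrow> real"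
    and Dh :: "nat \<Rightarrow> 'a \<Rightarrow> 'a"
    and L :: "nat \<Rightarrow> real"
    and g :: "'a \<Rightarrow> real" and Dg :: "'a \<Rightarrow> 'a" and Lg :: real
    and \<alpha> \<beta> :: "nat \<Rightarrow> real"
    and x :: "nat \<Rightarrow> 'a" and \<phi> :: "nat \<Rightarrow> nat \<Rightarrow> 'a"
    and F :: "'a \<Rightarrow> real" and S :: "'a set"
  assumes m_pos: "m \<ge> 1"
    and f_convex: "\<forall>i\<in>{1..m}. convex_on UNIV (f i)"
    and h_convex: "\<forall>i\<in>{1..m}. convex_on UNIV (h i)"
    and h_grad: "\<forall>i\<in>{1..m}. \<forall>y. (h i has_derivative (\<lambda>v. Dh i y \<bullet> v)) (at y)"
    and h_lip: "\<forall>i\<in>{1..m}. L i > 0 \<and> (L i)-lipschitz_on UNIV (Dh i)"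
    and F_def: "F = (\<lambda>y. \<Sum>i\<in>{1..m}. f i y + h i y)"
    and g_convex: "convex_on UNIV g"
    and g_grad: "\<forall>y. (g has_derivative (\<lambda>v. Dg y \<bullet> v)) (at y)"
    and g_lip: "Lg > 0" "Lg-lipschitz_on UNIV Dg"
    and g_min: "(\<exists>y. g y = 0) \<and> (\<forall>y. g y \<ge> 0)"
    and S_def: "S = {y \<in> argmin_set g. \<forall>z\<in>argmin_set g. F y \<le> F z}"
    and S_ne: "S \<noteq> {}"
    and \<alpha>_pos: "\<forall>k\<ge>1. \<alpha> k > 0" and \<beta>_pos: "\<forall>k\<ge>1. \<beta> k > 0"
    and \<phi>_1: "\<forall>k\<ge>1. \<phi> k 1 = x k - (\<alpha> k * \<beta> k) *\<^sub>R Dg (x k)"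
    and \<phi>_step: "\<forall>k\<ge>1. \<forall>i\<in>{1..m}.
        \<phi> k (i + 1) = prox (\<alpha> k) (f i) (\<phi> k i - \<alpha> k *\<^sub>R Dh i (\<phi> k i))"
    and x_step: "\<forall>k\<ge>1. x (k + 1) = \<phi> k (m + 1)"
    and H1: "\<forall>y. subdiff (\<lambda>z. ereal (\<Sum>i\<in>{1..m}. f i z) + indicator_fun (argmin_set g) z) y
        = {(\<Sum>i\<in>{1..m}. w i) + p | w p.
            (\<forall>i\<in>{1..m}. w i \<in> subdiff (\<lambda>z. ereal (f i z)) y) \<and> p \<in> normal_cone (argmin_set g) y}"
    and H2: "\<not> summable (\<lambda>k. \<alpha> (k + 1))" "summable (\<lambda>k. (\<alpha> (k + 1))^2)"
    and H3: "0 < liminf (\<lambda>k. ereal (\<alpha> k * \<beta> k))"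
            "limsup (\<lambda>k. ereal (\<alpha> k * \<beta> k)) < ereal (2 / Lg)"
    and H4: "\<forall>p \<in> (\<Union>y\<in>argmin_set g. normal_cone (argmin_set g) y).
        (\<Sum>k. ereal (\<alpha> (k + 1) * \<beta> (k + 1)) *
            (fconj g ((1 / \<beta> (k + 1)) *\<^sub>R p) - support_fun (argmin_set g) ((1 / \<beta> (k + 1)) *\<^sub>R p))) < \<infinity>"
  shows "quasi_fejer (\<lambda>k. x (k + 1)) S
    \<and> (\<forall>u\<in>S. convergent (\<lambda>k. norm (x k - u)))
    \<and> summable (\<lambda>k. \<alpha> (k + 1) * \<beta> (k + 1) * g (x (k + 1)))
    \<and> summable (\<lambda>k. \<alpha> (k + 1) * \<beta> (k + 1) * (norm (Dg (x (k + 1))))^2)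
    \<and> summable (\<lambda>k. \<Sum>i\<in>{1..m}. (norm (\<phi> (k + 1) (i + 1) - \<phi> (k + 1) i))^2)
    \<and> ((\<lambda>k. g (x k)) \<longlonglongrightarrow> 0)
    \<and> ((\<lambda>k. norm (Dg (x k))) \<longlonglongrightarrow> 0)
    \<and> ((\<lambda>k. \<Sum>i\<in>{1..m}. (norm (\<phi> k (i + 1) - \<phi> k i))^2) \<longlonglongrightarrow> 0)
    \<and> ((\<lambda>k. norm (x k - \<phi> k 1)) \<longlonglongrightarrow> 0)
    \<and> (\<forall>z r. strict_mono r \<and> (x \<circ> r) \<longlonglongrightarrow> z \<longrightarrow> z \<in> argmin_set g)"
proof -
  interpret incremental_penalty_scheme m f h Dh L g Dg Lg \<alpha> \<beta> x \<phi>
    using assms by unfold_locales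
  obtain \<theta> \<eta> \<beta>0 K where "incremental_penalty_scheme_tail m f h Dh L g Dg Lg \<alpha> \<beta> x \<phi> \<theta> \<eta> \<beta>0 K"
    using tail_constants_exist by blast
  then interpret tail: incremental_penalty_scheme_tail m f h Dh L g Dg Lg \<alpha> \<beta> x \<phi> \<theta> \<eta> \<beta>0 K .
  have S: "S = solutions"
    unfolding S_def F_def solutions_def ..
  with S_ne have "solutions \<noteq> {}" by simp
  then show ?thesis
    unfolding S
    by (intro conjI ballI allI impI tail.quasi_fejer_solutions tail.convergent_dist
        tail.summable_weighted_residuals tail.penalty_tendsto_zero tail.gradient_tendsto_zero
        tail.increments_tendsto_zero tail.gradient_step_tendsto_zero)
      (auto intro: tail.cluster_point_in_argmin)
qed

end
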